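(* Let $d\ge2$ and $\Phi_t:\mathbb M_d\to\mathbb M_d$, $\Phi_t(X)=\mathrm{Tr}(X)I_d-tX$, $t\in\mathbb R$. For $\alpha\in[1,d]$ with $\alpha=k+\theta$, $k=\lfloor\alpha\rfloor$, $\theta\in[0,1)$, let $t^\ast_\alpha:=\frac{k+\theta^2}{(k+\theta)^2}$. Then: (i) if $t\le0$, $\Phi_t$ is completely positive and $\tau(\Phi_t)=d$; (ii) if $0<t\le\frac1d$, $\Phi_t$ is completely positive and $\tau(\Phi_t)=d$; (iii) if $\frac1d<t<1$, then $\tau(\Phi_t)$ is the unique $\alpha\in(1,d)$ with $t=t^\ast_\alpha$; more explicitly, if $t\in(\frac1{k+1},\frac1k]$ for some $k\in\{1,\dots,d-1\}$, then $\tau(\Phi_t)=k+\theta(t)$ where $\theta(t)\in[0,1)$ is the unique solution in $[0,1)$ of $(t-1)\theta^2+2tk\theta+(tk^2-k)=0$; equivalently, for $t\in(\frac1{k+1},\frac1k)$, $\theta(t)=\frac{tk-\sqrt{k(t(k+1)-1)}}{1-t}$; and at $t=\frac1k$, $\theta(t)=0$, so $\tau(\Phi_{1/k})=k$; (iv) $\tau(\Phi_1)=1$.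
   Context: The Choi matrix of a linear $\Phi:\mathbb M_d\to\mathbb M_d$ is $C_\Phi=\sum_{i,j}E_{ij}\otimes\Phi(E_{ij})$. Schmidt coefficients $s_1(\psi)\ge\dots\ge s_d(\psi)\ge0$ of $\psi=\sum a_{ij}e_i\otimes e_j$ are the singular values of $[a_{ij}]$. For $\alpha\in[1,d]$ with $k=\lfloor\alpha\rfloor$, $\theta=\alpha-k$, $r=\lceil\alpha\rceil$, a unit vector $\psi$ is $\alpha$-admissible if $s_j(\psi)=0$ for $j\ge r+1$ and, when $\theta>0$, $s_{k+1}(\psi)\le\frac\theta k\sum_{j=1}^ks_j(\psi)$; $\mathcal V_\alpha$ is the set of these. A Hermitian-preserving $\Phi$ is in $\mathsf P_\alpha$ if $\langle\psi,C_\Phi\psi\rangle\ge0$ for all $\psi\in\mathcal V_\alpha$. For a Hermitian-preserving $\Phi\in\mathsf P_1$, the stability index is $\tau(\Phi):=\sup\{\alpha\in[1,d]:\Phi\in\mathsf P_\alpha\}$. *)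

theory Defs
  imports "Jordan_Normal_Form.Char_Poly" "Jordan_Normal_Form.Conjugate"
    "HOL-Computational_Algebra.Polynomial" "HOL-Library.Multiset"
begin

(* Matrices in M_d are complex d x d matrices (type complex mat with carrier_mat d d).
   C^d (x) C^d is identified with C^(d*d) via e_i (x) e_j  <->  e_(i*d+j)  (i,j < d). *)

definition mtrace :: "complex mat \<Rightarrow> complex" where
  "mtrace X = (\<Sum>i<dim_row X. X $$ (i,i))"

definition adj :: "complex mat \<Rightarrow> complex mat" where
  "adj A = mat (dim_col A) (dim_row A) (\<lambda>(i,j). cnj (A $$ (j,i)))"

definition Eunit :: "nat \<Rightarrow> nat \<Rightarrow> nat \<Rightarrow> complex mat" where
  "Eunit d i j = mat d d (\<lambda>(a,b). if a = i \<and> b = j then 1 else 0)"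

(* Choi matrix C_Phi = sum_ij E_ij (x) Phi(E_ij): entry ((i,k),(j,l)) = Phi(E_ij)_(k,l) *)
definition choi :: "nat \<Rightarrow> (complex mat \<Rightarrow> complex mat) \<Rightarrow> complex mat" where
  "choi d \<Phi> = mat (d*d) (d*d)
     (\<lambda>(p,q). \<Phi> (Eunit d (p div d) (q div d)) $$ (p mod d, q mod d))"

(* quadratic form <psi, C psi> (inner product antilinear in the first slot) *)
definition qform :: "complex mat \<Rightarrow> complex vec \<Rightarrow> complex" where
  "qform C \<psi> = (C *\<^sub>v \<psi>) \<bullet>c \<psi>"

definition coeff_mat :: "nat \<Rightarrow> complex vec \<Rightarrow> complex mat" where
  "coeff_mat d \<psi> = mat d d (\<lambda>(i,j). \<psi> $ (i*d + j))"

definition singular_values :: "complex mat \<Rightarrow> real list" where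
  "singular_values A = rev (sorted_list_of_multiset
      (image_mset (\<lambda>z. sqrt (Re z)) (proots (char_poly (adj A * A)))))"

(* Schmidt coefficient s_j(psi), 1-indexed *)
definition schmidt :: "nat \<Rightarrow> complex vec \<Rightarrow> nat \<Rightarrow> real" where
  "schmidt d \<psi> j = singular_values (coeff_mat d \<psi>) ! (j - 1)"

definition unit_vec_dd :: "nat \<Rightarrow> complex vec \<Rightarrow> bool" where
  "unit_vec_dd d \<psi> \<longleftrightarrow> \<psi> \<in> carrier_vec (d*d) \<and> (\<Sum>i<d*d. (cmod (\<psi> $ i))\<^sup>2) = 1"

definition admissible :: "nat \<Rightarrow> real \<Rightarrow> complex vec \<Rightarrow> bool" where
  "admissible d \<alpha> \<psi> \<longleftrightarrow>
     (let k = nat \<lfloor>\<alpha>\<rfloor>; \<theta> = \<alpha> - real k; r = nat \<lceil>\<alpha>\<rceil> in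
       unit_vec_dd d \<psi> \<and>
       (\<forall>j. r + 1 \<le> j \<and> j \<le> d \<longrightarrow> schmidt d \<psi> j = 0) \<and>
       (\<theta> > 0 \<longrightarrow> schmidt d \<psi> (k+1) \<le> \<theta> / real k * (\<Sum>j=1..k. schmidt d \<psi> j)))"

definition V_alpha :: "nat \<Rightarrow> real \<Rightarrow> complex vec set" where
  "V_alpha d \<alpha> = {\<psi>. admissible d \<alpha> \<psi>}"

definition hermitian_preserving :: "nat \<Rightarrow> (complex mat \<Rightarrow> complex mat) \<Rightarrow> bool" where
  "hermitian_preserving d \<Phi> \<longleftrightarrow>
     (\<forall>X \<in> carrier_mat d d. adj X = X \<longrightarrow> \<Phi> X \<in> carrier_mat d d \<and> adj (\<Phi> X) = \<Phi> X)"

(* membership in P_alpha; "\<ge> 0" in C means real and nonnegative *)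
definition in_P :: "nat \<Rightarrow> real \<Rightarrow> (complex mat \<Rightarrow> complex mat) \<Rightarrow> bool" where
  "in_P d \<alpha> \<Phi> \<longleftrightarrow> hermitian_preserving d \<Phi> \<and>
     (\<forall>\<psi> \<in> V_alpha d \<alpha>. Im (qform (choi d \<Phi>) \<psi>) = 0 \<and> Re (qform (choi d \<Phi>) \<psi>) \<ge> 0)"

definition stability_index :: "nat \<Rightarrow> (complex mat \<Rightarrow> complex mat) \<Rightarrow> real" where
  "stability_index d \<Phi> = Sup {\<alpha>. 1 \<le> \<alpha> \<and> \<alpha> \<le> real d \<and> in_P d \<alpha> \<Phi>}"

definition psd :: "nat \<Rightarrow> complex mat \<Rightarrow> bool" where
  "psd m X \<longleftrightarrow> X \<in> carrier_mat m m \<and> adj X = X \<and>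
     (\<forall>v \<in> carrier_vec m. Im (qform X v) = 0 \<and> Re (qform X v) \<ge> 0)"

(* (id_n (x) Phi) applied to X in M_n (x) M_d = M_n(M_d), acting blockwise *)
definition ampliation :: "nat \<Rightarrow> nat \<Rightarrow> (complex mat \<Rightarrow> complex mat) \<Rightarrow> complex mat \<Rightarrow> complex mat" where
  "ampliation n d \<Phi> X = mat (n*d) (n*d)
     (\<lambda>(p,q). \<Phi> (mat d d (\<lambda>(i,j). X $$ ((p div d)*d + i, (q div d)*d + j))) $$ (p mod d, q mod d))"

definition completely_positive :: "nat \<Rightarrow> (complex mat \<Rightarrow> complex mat) \<Rightarrow> bool" where
  "completely_positive d \<Phi> \<longleftrightarrow>
     (\<forall>n X. psd (n*d) X \<longrightarrow> psd (n*d) (ampliation n d \<Phi> X))"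

definition Phi_t :: "nat \<Rightarrow> real \<Rightarrow> complex mat \<Rightarrow> complex mat" where
  "Phi_t d t X = mtrace X \<cdot>\<^sub>m 1\<^sub>m d - complex_of_real t \<cdot>\<^sub>m X"

definition tstar :: "real \<Rightarrow> real" where
  "tstar \<alpha> = (let k = real_of_int \<lfloor>\<alpha>\<rfloor>; \<theta> = \<alpha> - k in (k + \<theta>\<^sup>2) / (k + \<theta>)\<^sup>2)"

end

theory Submission
  imports Defs "Jordan_Normal_Form.Schur_Decomposition" "HOL-Analysis.Convex"
begin

(* The Choi matrix of Phi_t is I - t |Omega><Omega| with Omega = sum_i e_i (x) e_i, so a unit vector psi
   with coefficient matrix A gives <psi, C psi> = 1 - t |Tr A|^2.  By a unitary triangularisation of
   A^* A, |Tr A| is at most the sum of the singular values of A, so maximising |Tr A| over V_alpha means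
   maximising s_1 + ... + s_d subject to sum s_j^2 = 1 and the admissibility constraints.  For
   alpha = k + theta the maximum is (k + theta) / sqrt (k + theta^2), attained at the profile
   (1, ..., 1, theta, 0, ..., 0) / sqrt (k + theta^2); hence Phi_t lies in P_alpha iff t <= t*_alpha.
   Since t*_alpha decreases strictly from 1 at alpha = 1 to 1/d at alpha = d, tau(Phi_t) is d for
   t <= 1/d and the solution of t*_alpha = t for 1/d < t < 1.  Complete positivity for t <= 1/d is the
   inequality <v, X v> <= d * sum_l <v_l, X v_l> for positive X and v = v_1 + ... + v_d. *)

lemma adj_carrier [simp]: "A \<in> carrier_mat n m \<Longrightarrow> adj A \<in> carrier_mat m n"
  unfolding adj_def by auto

lemma adj_dims [simp]: "dim_row (adj A) = dim_col A" "dim_col (adj A) = dim_row A"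
  unfolding adj_def by auto

lemma adj_index [simp]: "i < dim_col A \<Longrightarrow> j < dim_row A \<Longrightarrow> adj A $$ (i,j) = cnj (A $$ (j,i))"
  unfolding adj_def by auto

lemma adj_mult:
  assumes "A \<in> carrier_mat n m" "B \<in> carrier_mat m p"
  shows "adj (A * B) = adj B * adj A"
  by (rule eq_matI) (use assms in \<open>auto simp: scalar_prod_def cnj_sum intro!: sum.cong\<close>)

lemma adj_one [simp]: "adj (1\<^sub>m n) = 1\<^sub>m n"
  by (rule eq_matI) auto

lemma adj_four_block_one:
  assumes "P \<in> carrier_mat k k"
  shows "adj (four_block_mat (1\<^sub>m 1) (0\<^sub>m 1 k) (0\<^sub>m k 1) P)
       = four_block_mat (1\<^sub>m 1) (0\<^sub>m 1 k) (0\<^sub>m k 1) (adj P)"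
  by (rule eq_matI) (use assms in \<open>auto simp: index_mat_four_block\<close>)

lemma cnj_mult_self: "cnj z * z = (complex_of_real (cmod z))\<^sup>2"
  by (metis complex_norm_square mult.commute of_real_power)

lemma mtrace_comm:
  assumes "X \<in> carrier_mat n m" "Y \<in> carrier_mat m n"
  shows "mtrace (X * Y) = mtrace (Y * X)"
  using assms unfolding mtrace_def
  by (simp add: scalar_prod_def atLeast0LessThan, subst sum.swap, simp add: mult.commute)

section \<open>Unitary triangularization\<close>

definition unitary_mat :: "nat \<Rightarrow> complex mat \<Rightarrow> bool" where
  "unitary_mat n P \<longleftrightarrow> P \<in> carrier_mat n n \<and> adj P * P = 1\<^sub>m n \<and> P * adj P = 1\<^sub>m n"

lemma cscalar_prod_smult:
  assumes "v \<in> carrier_vec n" "w \<in> carrier_vec n"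
  shows "(a \<cdot>\<^sub>v v) \<bullet>c (b \<cdot>\<^sub>v w) = a * cnj b * (v \<bullet>c w)"
  using assms by (auto simp: scalar_prod_def sum_distrib_left intro!: sum.cong)

definition cnormalize :: "complex vec \<Rightarrow> complex vec" where
  "cnormalize v = complex_of_real (1 / sqrt (Re (v \<bullet>c v))) \<cdot>\<^sub>v v"

lemma cnormalize_carrier [simp]: "v \<in> carrier_vec n \<Longrightarrow> cnormalize v \<in> carrier_vec n"
  unfolding cnormalize_def by auto

lemma cnormalize_unit:
  assumes v: "v \<in> carrier_vec n" "v \<noteq> 0\<^sub>v n"
  shows "cnormalize v \<bullet>c cnormalize v = 1"
proof -
  have "v \<bullet>c v > 0" using conjugate_square_greater_0_vec[of v] v by auto
  then obtain r where r: "v \<bullet>c v = complex_of_real r" "r > 0"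
    by (metis less_complex_def complex_eq_iff zero_complex.simps Re_complex_of_real Im_complex_of_real)
  show ?thesis
    unfolding cnormalize_def cscalar_prod_smult[OF v(1) v(1)] r(1) using r(2)
    by (simp flip: of_real_mult add: real_sqrt_mult[symmetric])
qed

lemma cnormalize_id: "v \<bullet>c v = 1 \<Longrightarrow> cnormalize v = v"
  unfolding cnormalize_def by simp

lemma orthonormal_cnormalize:
  assumes ws: "set ws \<subseteq> carrier_vec n" "corthogonal ws"
    and ij: "i < length ws" "j < length ws"
  shows "cnormalize (ws ! i) \<bullet>c cnormalize (ws ! j) = (if i = j then 1 else 0)"
proof (cases "i = j")
  case True
  have "ws ! i \<noteq> 0\<^sub>v n" using corthogonalD[OF ws(2) ij(1) ij(1)] by auto
  moreover have "ws ! i \<in> carrier_vec n" using ws ij by auto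
  ultimately show ?thesis using cnormalize_unit True by auto
next
  case False
  have c: "ws ! i \<in> carrier_vec n" "ws ! j \<in> carrier_vec n" using ws ij by auto
  have "ws ! i \<bullet>c ws ! j = 0" using corthogonalD[OF ws(2) ij] False by simp
  thus ?thesis using False unfolding cnormalize_def cscalar_prod_smult[OF c] by simp
qed

lemma adj_mat_of_orthonormal_cols:
  assumes ws: "set ws \<subseteq> carrier_vec n" "length ws = n"
    and orth: "\<And>i j. i < n \<Longrightarrow> j < n \<Longrightarrow> ws ! i \<bullet>c ws ! j = (if i = j then 1 else 0)"
  shows "adj (mat_of_cols n ws) * mat_of_cols n ws = 1\<^sub>m n"
    and "corthogonal_inv (mat_of_cols n ws) = adj (mat_of_cols n ws)"
proof -
  show "adj (mat_of_cols n ws) * mat_of_cols n ws = 1\<^sub>m n"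
  proof (rule eq_matI)
    fix i j assume i: "i < dim_row (1\<^sub>m n)" and j: "j < dim_col (1\<^sub>m n)"
    have "ws ! i \<in> carrier_vec n" "ws ! j \<in> carrier_vec n" using ws i j by auto
    hence "(adj (mat_of_cols n ws) * mat_of_cols n ws) $$ (i,j) = ws ! j \<bullet>c ws ! i"
      using i j ws by (auto simp: scalar_prod_def mat_of_cols_def intro!: sum.cong)
    thus "(adj (mat_of_cols n ws) * mat_of_cols n ws) $$ (i,j) = 1\<^sub>m n $$ (i,j)"
      using orth[of j i] i j by auto
  qed (use ws in auto)
  show "corthogonal_inv (mat_of_cols n ws) = adj (mat_of_cols n ws)"
  proof (rule eq_matI)
    fix i j assume "i < dim_row (adj (mat_of_cols n ws))" "j < dim_col (adj (mat_of_cols n ws))"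
    hence i: "i < n" and j: "j < n" using ws by auto
    have "ws ! i \<in> carrier_vec n" using ws i by auto
    hence "vec n (($) (ws ! i)) = ws ! i" by auto
    thus "corthogonal_inv (mat_of_cols n ws) $$ (i,j) = adj (mat_of_cols n ws) $$ (i,j)"
      using i j orth[OF i i] ws \<open>ws ! i \<in> carrier_vec n\<close> unfolding corthogonal_inv_def vec_inv_def
      by (auto simp: mat_of_cols_def mat_of_rows_def)
  qed (auto simp: corthogonal_inv_def)
qed

lemma unitary_eigenframe:
  assumes A: "A \<in> carrier_mat n n" and e: "eigenvalue A e" and n: "n \<noteq> 0"
  shows "\<exists>W. unitary_mat n W \<and> col (adj W * A * W) 0 = vec n (\<lambda>i. if i = 0 then e else 0)"
proof -
  obtain v0 where "eigenvector A v0 e" using find_eigenvector[OF A e] by blast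
  hence v0: "v0 \<in> carrier_vec n" "v0 \<noteq> 0\<^sub>v n" "A *\<^sub>v v0 = e \<cdot>\<^sub>v v0"
    using A unfolding eigenvector_def by auto
  define v where "v = cnormalize v0"
  have v: "v \<in> carrier_vec n" and vunit: "v \<bullet>c v = 1"
    unfolding v_def using cnormalize_unit[OF v0(1,2)] v0 by auto
  hence v_nz: "v \<noteq> 0\<^sub>v n" by auto
  have eigen: "A *\<^sub>v v = e \<cdot>\<^sub>v v"
    unfolding v_def cnormalize_def using v0 A by (simp add: mult_mat_vec smult_smult_assoc mult.commute)
  interpret cof_vec_space n "TYPE(complex)" .
  define b where "b = basis_completion v"
  from basis_completion[OF v v_nz, folded b_def]
  have b: "set b \<subseteq> carrier_vec n" "distinct b" "\<not> lin_dep (set b)" "hd b = v" "length b = n"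
    by auto
  then obtain vs where bv: "b = v # vs" using n by (cases b) auto
  define ws0 where "ws0 = gram_schmidt n b"
  from gram_schmidt_result[OF b(1-3) refl, folded ws0_def]
  have ws0: "set ws0 \<subseteq> carrier_vec n" "corthogonal ws0" "length ws0 = n"
    by (auto simp: b(5))
  have hd_ws0: "hd ws0 = v" using gram_schmidt_hd[OF v, of vs] unfolding ws0_def bv .
  define ws where "ws = map cnormalize ws0"
  have ws: "set ws \<subseteq> carrier_vec n" "length ws = n" using ws0 unfolding ws_def by auto
  have orth: "ws ! i \<bullet>c ws ! j = (if i = j then 1 else 0)" if "i < n" "j < n" for i j
    using orthonormal_cnormalize[OF ws0(1,2)] that ws0(3) unfolding ws_def by auto
  have hd_ws: "hd ws = v" unfolding ws_def using hd_ws0 ws0(3) n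
    by (cases ws0) (auto simp: cnormalize_id[OF vunit])
  define W where "W = mat_of_cols n ws"
  note W_orth = adj_mat_of_orthonormal_cols[OF ws orth, folded W_def]
  have W: "W \<in> carrier_mat n n" unfolding W_def using ws(2) by (simp add: mat_of_cols_def)
  have "W * adj W = 1\<^sub>m n"
    using mat_mult_left_right_inverse[OF _ W W_orth(1)] W by auto
  moreover have "corthogonal ws" using orth ws by (auto intro!: corthogonalI)
  hence "col (corthogonal_inv W * A * W) 0 = vec n (\<lambda>i. if i = 0 then e else 0)"
    using corthogonal_col_ev_0[OF A v v_nz eigen n hd_ws ws(1) _ ws(2)] unfolding W_def by blast
  hence "col (adj W * A * W) 0 = vec n (\<lambda>i. if i = 0 then e else 0)"
    using W_orth(2) by simp
  ultimately show ?thesis using W W_orth(1) unfolding unitary_mat_def by blast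
qed

lemma four_block_of_first_column:
  assumes A: "A \<in> carrier_mat n n" and n: "n \<noteq> 0"
    and col0: "col A 0 = vec n (\<lambda>i. if i = 0 then e else 0)"
  shows "\<exists>A2 A3. A2 \<in> carrier_mat 1 (n - 1) \<and> A3 \<in> carrier_mat (n - 1) (n - 1) \<and>
    A = four_block_mat (mat 1 1 (\<lambda>_. e)) A2 (0\<^sub>m (n - 1) 1) A3"
proof -
  obtain A1 A2 A0 A3 where split: "split_block A 1 1 = (A1, A2, A0, A3)"
    by (cases "split_block A 1 1") auto
  have "dim_row A = 1 + (n - 1)" "dim_col A = 1 + (n - 1)" using A n by auto
  from split_block[OF split this]
  have A2: "A2 \<in> carrier_mat 1 (n - 1)" and A3: "A3 \<in> carrier_mat (n - 1) (n - 1)"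
    and A_block: "A = four_block_mat A1 A2 A0 A3" by auto
  have "A1 = mat 1 1 (\<lambda>_. e)"
    using split[unfolded split_block_def Let_def] arg_cong[OF col0, of "\<lambda>v. v $ 0"] A n
    by (auto simp: col_def)
  moreover have "A $$ (Suc i, 0) = 0" if "i < n - 1" for i
    using arg_cong[OF col0, of "\<lambda>v. v $ Suc i"] that A by auto
  hence "A0 = 0\<^sub>m (n - 1) 1"
    using split[unfolded split_block_def Let_def] A by auto
  ultimately show ?thesis using A2 A3 A_block by blast
qed

lemma char_poly_four_block_eigen:
  assumes "A2 \<in> carrier_mat 1 m" "A3 \<in> carrier_mat m m"
  shows "char_poly (four_block_mat (mat 1 1 (\<lambda>_. e)) A2 (0\<^sub>m m 1) A3) = [:- e, 1:] * char_poly A3"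
proof -
  have "char_poly (mat 1 1 (\<lambda>_. e)) = [:- e, 1:]"
    by (simp add: char_poly_defs det_def sign_def)
  thus ?thesis using char_poly_four_block_zeros_col[OF _ assms, of "mat 1 1 (\<lambda>_. e)"] by simp
qed

lemma similar_mat_wit_four_block_eigen:
  assumes sim: "similar_mat_wit A3 B P (adj P)" and A2: "A2 \<in> carrier_mat 1 m"
    and A3: "A3 \<in> carrier_mat m m"
  defines "P\<^sub>1 \<equiv> four_block_mat (1\<^sub>m 1) (0\<^sub>m 1 m) (0\<^sub>m m 1) P"
  shows "similar_mat_wit (four_block_mat (mat 1 1 (\<lambda>_. e)) A2 (0\<^sub>m m 1) A3)
    (four_block_mat (mat 1 1 (\<lambda>_. e)) (A2 * P) (0\<^sub>m m 1) B) P\<^sub>1 (adj P\<^sub>1)"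
proof -
  from similar_mat_witD2[OF A3 sim] have P: "P \<in> carrier_mat m m" and "P * adj P = 1\<^sub>m m" by auto
  hence A2P: "A2 * P * adj P = A2"
    using A2 by (simp add: assoc_mult_mat[OF A2 P adj_carrier[OF P]])
  show ?thesis unfolding P\<^sub>1_def adj_four_block_one[OF P]
    by (rule similar_mat_wit_four_block[OF similar_mat_wit_refl sim])
      (use similar_mat_witD2[OF A3 sim] A2 A2P in auto)
qed

theorem unitary_schur_decomposition:
  assumes "A \<in> carrier_mat n n" and "char_poly A = (\<Prod>e \<leftarrow> es. [:- e, 1:])"
  shows "\<exists>B P. similar_mat_wit A B P (adj P) \<and> upper_triangular B \<and> diag_mat B = es"
  using assms
proof (induct es arbitrary: n A)
  case Nil
  hence "n = 0" using degree_monic_char_poly[OF Nil.prems(1)] by auto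
  thus ?case using Nil.prems(1)
    by (intro exI[of _ A] exI[of _ "1\<^sub>m n"])
      (auto intro: similar_mat_wit_refl simp: diag_mat_def upper_triangular_def)
next
  case (Cons e es n A)
  note A = Cons.prems(1)
  have cp: "char_poly A = [:- e, 1:] * (\<Prod>e \<leftarrow> es. [:- e, 1:])" using Cons.prems(2) by simp
  have "monic (\<Prod>e \<leftarrow> es. [:- e, 1:])" by (rule monic_prod_list) auto
  hence "degree (char_poly A) \<noteq> 0" unfolding cp by (subst degree_mult_eq) auto
  hence n: "n \<noteq> 0" using degree_monic_char_poly[OF A] by auto
  have "eigenvalue A e" unfolding eigenvalue_root_char_poly[OF A] cp by simp
  then obtain W where "unitary_mat n W"
    and col0: "col (adj W * A * W) 0 = vec n (\<lambda>i. if i = 0 then e else 0)"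
    using unitary_eigenframe[OF A _ n] by blast
  hence W: "W \<in> carrier_mat n n" "adj W * W = 1\<^sub>m n" "W * adj W = 1\<^sub>m n"
    unfolding unitary_mat_def by auto
  define A' where "A' = adj W * A * W"
  have A': "A' \<in> carrier_mat n n" unfolding A'_def using W A by auto
  have simA'A: "similar_mat_wit A' A (adj W) W"
    by (rule similar_mat_witI[of _ _ n]) (use W A A' in \<open>auto simp: A'_def\<close>)
  obtain A2 A3 where A2: "A2 \<in> carrier_mat 1 (n - 1)" and A3: "A3 \<in> carrier_mat (n - 1) (n - 1)"
    and A'_block: "A' = four_block_mat (mat 1 1 (\<lambda>_. e)) A2 (0\<^sub>m (n - 1) 1) A3"
    using four_block_of_first_column[OF A' n col0[folded A'_def]] by blast
  have "char_poly A = char_poly A'"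
    using char_poly_similar[of A' A] simA'A unfolding similar_mat_def by (metis (no_types))
  also have "\<dots> = [:- e, 1:] * char_poly A3"
    unfolding A'_block by (rule char_poly_four_block_eigen[OF A2 A3])
  finally have "char_poly A3 = (\<Prod>e \<leftarrow> es. [:- e, 1:])"
    unfolding cp by (metis mult_cancel_left pCons_eq_0_iff zero_neq_one)
  from Cons.hyps[OF A3 this] obtain B P where sim: "similar_mat_wit A3 B P (adj P)"
    and ut: "upper_triangular B" and diag: "diag_mat B = es" by blast
  have B: "B \<in> carrier_mat (n - 1) (n - 1)" and P: "P \<in> carrier_mat (n - 1) (n - 1)"
    using similar_mat_witD2[OF A3 sim] by auto
  let ?P = "four_block_mat (1\<^sub>m 1) (0\<^sub>m 1 (n - 1)) (0\<^sub>m (n - 1) 1) P"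
  define C where "C = four_block_mat (mat 1 1 (\<lambda>_. e)) (A2 * P) (0\<^sub>m (n - 1) 1) B"
  have E: "mat 1 1 (\<lambda>_. e) \<in> carrier_mat 1 1" "diag_mat (mat 1 1 (\<lambda>_. e)) = [e]"
    by (auto simp: diag_mat_def)
  have "similar_mat_wit A C (W * ?P) (adj ?P * adj W)"
    using similar_mat_wit_trans[OF similar_mat_wit_sym[OF simA'A]]
      similar_mat_wit_four_block_eigen[OF sim A2 A3] unfolding A'_block C_def by blast
  moreover have "adj (W * ?P) = adj ?P * adj W" using W P n by (intro adj_mult) auto
  moreover have "upper_triangular C" unfolding C_def
    by (intro upper_triangular_four_block[OF _ B _ ut]) auto
  moreover have "diag_mat C = e # es"
    unfolding C_def diag_four_block_mat[OF E(1) B] E(2) diag by simp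
  ultimately show ?case by metis
qed

section \<open>Singular values\<close>

definition frobenius_sq :: "complex mat \<Rightarrow> real" where
  "frobenius_sq M = (\<Sum>j<dim_col M. \<Sum>i<dim_row M. (cmod (M $$ (i,j)))\<^sup>2)"

definition col_norm :: "complex mat \<Rightarrow> nat \<Rightarrow> real" where
  "col_norm M j = sqrt (\<Sum>i<dim_row M. (cmod (M $$ (i,j)))\<^sup>2)"

lemma col_norm_nonneg: "col_norm M j \<ge> 0"
  unfolding col_norm_def by (simp add: sum_nonneg)

lemma sum_col_norm_sq: "(\<Sum>j<dim_col M. (col_norm M j)\<^sup>2) = frobenius_sq M"
  unfolding col_norm_def frobenius_sq_def by (simp add: sum_nonneg)

lemma adj_mult_self_index:
  assumes "M \<in> carrier_mat n m" "j < m"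
  shows "(adj M * M) $$ (j,j) = of_real ((col_norm M j)\<^sup>2)"
  using assms unfolding col_norm_def
  by (simp add: scalar_prod_def atLeast0LessThan cnj_mult_self sum_nonneg)

lemma mtrace_adj_mult_self:
  assumes "M \<in> carrier_mat n m"
  shows "mtrace (adj M * M) = of_real (frobenius_sq M)"
  using assms unfolding mtrace_def frobenius_sq_def
  by (auto simp: scalar_prod_def atLeast0LessThan cnj_mult_self intro!: sum.cong)

lemma proots_prod_linear: "proots (\<Prod>e \<leftarrow> es. [:- e, 1:]) = mset (es :: complex list)"
proof -
  have "proots (\<Prod>e \<leftarrow> es. [:- e, 1:]) = proots (\<Prod>p \<leftarrow> map (\<lambda>e. [:- e, 1:]) es. p)"
    by (simp add: comp_def)
  also have "\<dots> = sum_list (map proots (map (\<lambda>e. [:- e, 1:]) es))"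
    by (rule proots_prod_list) auto
  also have "\<dots> = sum_list (map (\<lambda>e. {#e#}) es)" by (simp add: comp_def)
  also have "\<dots> = mset es" by (induct es) auto
  finally show ?thesis .
qed

lemma singular_values_col_norms:
  assumes A: "A \<in> carrier_mat d d"
  obtains P where "unitary_mat d P"
    and "mset (singular_values A) = mset (map (col_norm (A * P)) [0..<d])"
proof -
  define H where "H = adj A * A"
  have H: "H \<in> carrier_mat d d" unfolding H_def using A by auto
  obtain es where es: "char_poly H = (\<Prod>e \<leftarrow> es. [:- e, 1:])"
    using char_poly_factorized[OF H] by blast
  obtain B P where sim: "similar_mat_wit H B P (adj P)" and diag: "diag_mat B = es"
    using unitary_schur_decomposition[OF H es] by blast
  from similar_mat_witD2[OF H sim] have B: "B \<in> carrier_mat d d" and P: "P \<in> carrier_mat d d"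
    and unitary: "unitary_mat d P" unfolding unitary_mat_def by auto
  from similar_mat_witD2[OF B similar_mat_wit_sym[OF sim]]
  have "B = adj P * (H * P)" by auto
  also have "\<dots> = adj (A * P) * (A * P)"
    unfolding H_def adj_mult[OF A P] using A P
    by (simp add: assoc_mult_mat[of _ d d _ d _ d])
  finally have B_entry: "B $$ (j,j) = of_real ((col_norm (A * P) j)\<^sup>2)" if "j < d" for j
    using adj_mult_self_index[of "A * P" d d j] that A P by simp
  have "proots (char_poly H) = mset (map (\<lambda>j. B $$ (j,j)) [0..<d])"
    unfolding es proots_prod_linear diag[symmetric] diag_mat_def using B by simp
  hence "mset (singular_values A) = mset (map (\<lambda>j. sqrt (Re (B $$ (j,j)))) [0..<d])"
    unfolding singular_values_def H_def[symmetric] by (simp add: multiset.map_comp comp_def)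
  also have "\<dots> = mset (map (col_norm (A * P)) [0..<d])"
    by (intro arg_cong[of _ _ mset] map_cong) (auto simp: B_entry col_norm_nonneg)
  finally show ?thesis using that unitary by blast
qed

lemma frobenius_sq_mult_unitary:
  assumes A: "A \<in> carrier_mat d d" and P: "unitary_mat d P"
  shows "frobenius_sq (A * P) = frobenius_sq A"
proof -
  have Pc: "P \<in> carrier_mat d d" using P unfolding unitary_mat_def by auto
  have "adj (A * P) * (A * P) = adj P * (adj A * A * P)"
    unfolding adj_mult[OF A Pc] using A Pc by (simp add: assoc_mult_mat[of _ d d _ d _ d])
  moreover have "adj A * A * P \<in> carrier_mat d d" using A Pc by auto
  ultimately have "mtrace (adj (A * P) * (A * P)) = mtrace (adj A * A * P * adj P)"
    using mtrace_comm[OF adj_carrier[OF Pc]] by simp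
  also have "\<dots> = mtrace (adj A * A)"
    using P A unfolding unitary_mat_def by (simp add: assoc_mult_mat[of _ d d _ d _ d])
  finally show ?thesis
    using mtrace_adj_mult_self[of "A * P" d d] mtrace_adj_mult_self[OF A] A Pc by simp
qed

lemma cmod_sum_cnj_mult_le:
  "cmod (\<Sum>i\<in>S. cnj (a i) * b i) \<le> sqrt (\<Sum>i\<in>S. (cmod (a i))\<^sup>2) * sqrt (\<Sum>i\<in>S. (cmod (b i))\<^sup>2)"
proof -
  have "cmod (\<Sum>i\<in>S. cnj (a i) * b i) \<le> (\<Sum>i\<in>S. cmod (a i) * cmod (b i))"
    by (rule order_trans[OF norm_sum]) (simp add: norm_mult)
  also have "\<dots> \<le> sqrt ((\<Sum>i\<in>S. (cmod (a i))\<^sup>2) * (\<Sum>i\<in>S. (cmod (b i))\<^sup>2))"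
    by (rule real_le_rsqrt[OF Cauchy_Schwarz_ineq_sum])
  finally show ?thesis by (simp add: real_sqrt_mult)
qed

lemma cmod_mtrace_le_col_norms:
  assumes A: "A \<in> carrier_mat d d" and P: "unitary_mat d P"
  shows "cmod (mtrace A) \<le> (\<Sum>j<d. col_norm (A * P) j)"
proof -
  have Pc: "P \<in> carrier_mat d d" and PP: "P * adj P = 1\<^sub>m d" "adj P * P = 1\<^sub>m d"
    using P unfolding unitary_mat_def by auto
  have "mtrace A = mtrace (A * P * adj P)"
    using A Pc PP by (simp add: assoc_mult_mat[of _ d d _ d _ d])
  also have "\<dots> = mtrace (adj P * (A * P))" using A Pc by (intro mtrace_comm) auto
  also have "\<dots> = (\<Sum>j<d. \<Sum>i<d. cnj (P $$ (i,j)) * (A * P) $$ (i,j))"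
    unfolding mtrace_def using A Pc by (simp add: scalar_prod_def atLeast0LessThan)
  finally have "cmod (mtrace A) \<le> (\<Sum>j<d. cmod (\<Sum>i<d. cnj (P $$ (i,j)) * (A * P) $$ (i,j)))"
    by (simp add: norm_sum)
  also have "\<dots> \<le> (\<Sum>j<d. col_norm P j * col_norm (A * P) j)"
    unfolding col_norm_def using carrier_matD[OF A] carrier_matD[OF Pc]
    by (intro sum_mono) (simp add: cmod_sum_cnj_mult_le)
  also have "\<dots> = (\<Sum>j<d. col_norm (A * P) j)"
  proof (intro sum.cong refl)
    fix j assume "j \<in> {..<d}"
    hence "of_real ((col_norm P j)\<^sup>2) = (1 :: complex)"
      using adj_mult_self_index[OF Pc, of j] PP(2) by simp
    hence "(col_norm P j)\<^sup>2 = 1" by (simp only: of_real_eq_1_iff)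
    hence "col_norm P j = 1" using col_norm_nonneg[of P j] by (auto simp: power2_eq_1_iff)
    thus "col_norm P j * col_norm (A * P) j = col_norm (A * P) j" by simp
  qed
  finally show ?thesis .
qed

lemma
  assumes A: "A \<in> carrier_mat d d"
  shows length_singular_values: "length (singular_values A) = d"
    and singular_values_nonneg: "s \<in> set (singular_values A) \<Longrightarrow> s \<ge> 0"
    and sum_singular_values_sq: "(\<Sum>s \<leftarrow> singular_values A. s\<^sup>2) = frobenius_sq A"
    and cmod_mtrace_le_sum_singular_values: "cmod (mtrace A) \<le> sum_list (singular_values A)"
proof -
  obtain P where P: "unitary_mat d P"
    and sv: "mset (singular_values A) = mset (map (col_norm (A * P)) [0..<d])"
    using singular_values_col_norms[OF A] by blast
  have Pc: "P \<in> carrier_mat d d" using P unfolding unitary_mat_def by auto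
  have sum_sv: "(\<Sum>s \<leftarrow> singular_values A. g s) = (\<Sum>j<d. g (col_norm (A * P) j))" for g
  proof -
    have "(\<Sum>s \<leftarrow> singular_values A. g s) = sum_mset (image_mset g (mset (singular_values A)))"
      by (simp flip: sum_mset_sum_list)
    also have "\<dots> = (\<Sum>j \<leftarrow> [0..<d]. g (col_norm (A * P) j))"
      unfolding sv by (simp only: mset_map[symmetric] sum_mset_sum_list map_map comp_def)
    finally show ?thesis
      by (simp add: comp_def atLeast0LessThan flip: sum_set_upt_conv_sum_list_nat)
  qed
  show "length (singular_values A) = d" using arg_cong[OF sv, of size] by simp
  show "s \<in> set (singular_values A) \<Longrightarrow> s \<ge> 0"
    using arg_cong[OF sv, of set_mset] col_norm_nonneg by auto
  show "(\<Sum>s \<leftarrow> singular_values A. s\<^sup>2) = frobenius_sq A"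
    using sum_sv[of "\<lambda>s. s\<^sup>2"] sum_col_norm_sq[of "A * P"] frobenius_sq_mult_unitary[OF A P] Pc
    by simp
  show "cmod (mtrace A) \<le> sum_list (singular_values A)"
    using sum_sv[of "\<lambda>s. s"] cmod_mtrace_le_col_norms[OF A P] by simp
qed

section \<open>The quadratic form of the Choi matrix of \<open>\<Phi>\<^sub>t\<close>\<close>

lemma sum_lessThan_mult:
  fixes n d :: nat
  shows "(\<Sum>p<n * d. f p) = (\<Sum>i<n. \<Sum>j<d. f (i * d + j))"
proof -
  have "(\<Sum>i<n. \<Sum>j<d. f (i * d + j)) = (\<Sum>i<n. sum f {i * d..<i * d + d})"
  proof (rule sum.cong[OF refl])
    fix i assume "i \<in> {..<n}"
    show "(\<Sum>j<d. f (i * d + j)) = sum f {i * d..<i * d + d}"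
      using sum.shift_bounds_nat_ivl[of f 0 "i * d" d] by (simp add: atLeast0LessThan add.commute)
  qed
  also have "\<dots> = (\<Sum>p<n * d. f p)" by (rule sum.nat_group)
  finally show ?thesis by simp
qed

lemma index_lt_mult:
  fixes a i n d :: nat
  assumes "a < n" "i < d"
  shows "a * d + i < n * d"
proof -
  have "a * d + i < (a + 1) * d" using assms by simp
  also have "\<dots> \<le> n * d" using assms by (intro mult_right_mono) auto
  finally show ?thesis .
qed

lemma frobenius_sq_coeff_mat:
  assumes "\<psi> \<in> carrier_vec (d * d)"
  shows "frobenius_sq (coeff_mat d \<psi>) = (\<Sum>p<d * d. (cmod (\<psi> $ p))\<^sup>2)"
proof -
  have "frobenius_sq (coeff_mat d \<psi>) = (\<Sum>i<d. \<Sum>j<d. (cmod (coeff_mat d \<psi> $$ (i,j)))\<^sup>2)"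
    unfolding frobenius_sq_def by (subst sum.swap) (simp add: coeff_mat_def)
  thus ?thesis unfolding sum_lessThan_mult by (simp add: coeff_mat_def)
qed

lemma qform_eq_sum:
  assumes "C \<in> carrier_mat N N" "v \<in> carrier_vec N"
  shows "qform C v = (\<Sum>p<N. (\<Sum>q<N. C $$ (p,q) * v $ q) * cnj (v $ p))"
  using assms unfolding qform_def by (simp add: scalar_prod_def atLeast0LessThan)

lemma mtrace_Eunit: "i < d \<Longrightarrow> j < d \<Longrightarrow> mtrace (Eunit d i j) = (if i = j then 1 else 0)"
  unfolding mtrace_def Eunit_def by (auto simp: sum.delta)

lemma choi_Phi_t_index:
  assumes p: "p < d * d" and q: "q < d * d"
  shows "choi d (Phi_t d t) $$ (p,q) = (if p = q then 1 else 0)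
      - complex_of_real t * (if p div d = p mod d \<and> q div d = q mod d then 1 else 0)"
proof -
  have d: "d > 0" using p by (cases d) auto
  have lt: "p div d < d" "q div d < d" "p mod d < d" "q mod d < d"
    using p q d by (auto simp: less_mult_imp_div_less)
  have "(p div d = q div d \<and> p mod d = q mod d) = (p = q)"
    by (metis div_mult_mod_eq)
  moreover have "Phi_t d t (Eunit d a b) $$ (x,y) = (if a = b \<and> x = y then 1 else 0)
      - of_real t * (if x = a \<and> y = b then 1 else 0)" if "a < d" "b < d" "x < d" "y < d" for a b x y
    using that unfolding Phi_t_def by (simp add: mtrace_Eunit, simp add: Eunit_def)
  ultimately show ?thesis unfolding choi_def using p q lt by auto
qed

lemma qform_choi_Phi_t:
  assumes \<psi>: "\<psi> \<in> carrier_vec (d * d)"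
  shows "qform (choi d (Phi_t d t)) \<psi> =
     of_real (\<Sum>p<d * d. (cmod (\<psi> $ p))\<^sup>2) - of_real (t * (cmod (mtrace (coeff_mat d \<psi>)))\<^sup>2)"
proof -
  define D where "D p = (if p div d = p mod d then (1::complex) else 0)" for p
  define \<tau> where "\<tau> = (\<Sum>q<d * d. D q * \<psi> $ q)"
  have C: "choi d (Phi_t d t) \<in> carrier_mat (d * d) (d * d)" unfolding choi_def by simp
  have row: "(\<Sum>q<d * d. choi d (Phi_t d t) $$ (p,q) * \<psi> $ q) = \<psi> $ p - of_real t * D p * \<tau>"
    if p: "p < d * d" for p
  proof -
    have "(\<Sum>q<d * d. choi d (Phi_t d t) $$ (p,q) * \<psi> $ q)
       = (\<Sum>q<d * d. (if p = q then \<psi> $ q else 0) - of_real t * D p * (D q * \<psi> $ q))"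
      by (intro sum.cong refl) (auto simp: choi_Phi_t_index[OF p] D_def algebra_simps)
    thus ?thesis unfolding \<tau>_def using p by (simp add: sum_subtractf sum_distrib_left)
  qed
  have "\<tau> = mtrace (coeff_mat d \<psi>)"
  proof -
    have "\<tau> = (\<Sum>i<d. \<Sum>j<d. if j = i then \<psi> $ (i * d + j) else 0)"
      unfolding \<tau>_def sum_lessThan_mult by (intro sum.cong refl) (simp add: D_def)
    thus ?thesis unfolding mtrace_def coeff_mat_def by simp
  qed
  moreover have "(\<Sum>p<d * d. D p * cnj (\<psi> $ p)) = cnj \<tau>"
    unfolding \<tau>_def cnj_sum by (intro sum.cong refl) (simp add: D_def)
  moreover have "qform (choi d (Phi_t d t)) \<psi> = (\<Sum>p<d * d. (\<psi> $ p - of_real t * D p * \<tau>) * cnj (\<psi> $ p))"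
    unfolding qform_eq_sum[OF C \<psi>] by (intro sum.cong refl) (simp add: row)
  hence "qform (choi d (Phi_t d t)) \<psi>
      = (\<Sum>p<d * d. \<psi> $ p * cnj (\<psi> $ p)) - of_real t * \<tau> * (\<Sum>p<d * d. D p * cnj (\<psi> $ p))"
    by (simp add: algebra_simps sum_subtractf sum_distrib_left)
  ultimately show ?thesis by (simp add: cnj_mult_self mult.commute[of _ "cnj _"])
qed

lemma hermitian_preserving_Phi_t: "hermitian_preserving d (Phi_t d t)"
  unfolding hermitian_preserving_def
proof (intro ballI impI)
  fix X assume X: "X \<in> carrier_mat d d" and herm: "adj X = X"
  have X_entry: "cnj (X $$ (j,i)) = X $$ (i,j)" if "i < d" "j < d" for i j
    using arg_cong[OF herm, of "\<lambda>M. M $$ (i,j)"] that X by auto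
  have "cnj (mtrace X) = mtrace X" unfolding mtrace_def using X X_entry by (simp add: cnj_sum)
  moreover have PX: "Phi_t d t X \<in> carrier_mat d d"
    unfolding Phi_t_def using X by (intro minus_carrier_mat) simp
  ultimately have "adj (Phi_t d t X) = Phi_t d t X"
    by (intro eq_matI) (use X X_entry in \<open>auto simp: Phi_t_def\<close>)
  thus "Phi_t d t X \<in> carrier_mat d d \<and> adj (Phi_t d t X) = Phi_t d t X" using PX by simp
qed

lemma in_P_Phi_t_iff:
  "in_P d \<alpha> (Phi_t d t) \<longleftrightarrow> (\<forall>\<psi> \<in> V_alpha d \<alpha>. t * (cmod (mtrace (coeff_mat d \<psi>)))\<^sup>2 \<le> 1)"
proof -
  have "unit_vec_dd d \<psi>" if "\<psi> \<in> V_alpha d \<alpha>" for \<psi>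
    using that unfolding V_alpha_def admissible_def Let_def by auto
  thus ?thesis
    unfolding in_P_def unit_vec_dd_def using hermitian_preserving_Phi_t qform_choi_Phi_t by auto
qed

section \<open>Admissible Schmidt profiles\<close>

lemma nat_add_frac_decomp:
  assumes "1 \<le> \<alpha>"
  obtains k :: nat and \<theta> :: real where "\<alpha> = real k + \<theta>" "1 \<le> k" "0 \<le> \<theta>" "\<theta> < 1"
proof
  show "\<alpha> = real (nat \<lfloor>\<alpha>\<rfloor>) + (\<alpha> - real (nat \<lfloor>\<alpha>\<rfloor>))" by simp
  have "(1::int) \<le> \<lfloor>\<alpha>\<rfloor>" using assms by (simp add: le_floor_iff)
  thus "1 \<le> nat \<lfloor>\<alpha>\<rfloor>" "0 \<le> \<alpha> - real (nat \<lfloor>\<alpha>\<rfloor>)" "\<alpha> - real (nat \<lfloor>\<alpha>\<rfloor>) < 1"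
    by linarith+
qed

lemma floor_nat_add_frac:
  fixes k :: nat assumes "0 \<le> \<theta>" "\<theta> < 1"
  shows "nat \<lfloor>real k + \<theta>\<rfloor> = k"
proof -
  have "\<lfloor>real k + \<theta>\<rfloor> = int k" using assms by (simp add: floor_eq_iff)
  thus ?thesis by simp
qed

lemma ceiling_nat_add_frac:
  fixes k :: nat assumes "0 \<le> \<theta>" "\<theta> < 1"
  shows "nat \<lceil>real k + \<theta>\<rceil> = (if \<theta> = 0 then k else k + 1)"
proof (cases "\<theta> = 0")
  case False
  hence "\<lceil>real k + \<theta>\<rceil> = int k + 1" using assms by (simp add: ceiling_eq_iff)
  thus ?thesis using False by simp
qed simp

lemma tstar_nat_add_frac:
  fixes k :: nat assumes "0 \<le> \<theta>" "\<theta> < 1"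
  shows "tstar (real k + \<theta>) = (real k + \<theta>\<^sup>2) / (real k + \<theta>)\<^sup>2"
proof -
  have "\<lfloor>\<theta>\<rfloor> = 0" using assms by (simp add: floor_eq_iff)
  thus ?thesis unfolding tstar_def Let_def by simp
qed

lemma schmidt_nonneg:
  assumes "\<psi> \<in> carrier_vec (d * d)" "1 \<le> j" "j \<le> d"
  shows "schmidt d \<psi> j \<ge> 0"
proof -
  have "coeff_mat d \<psi> \<in> carrier_mat d d" unfolding coeff_mat_def by simp
  thus ?thesis unfolding schmidt_def using assms
    by (intro singular_values_nonneg[of _ d]) (auto simp: length_singular_values)
qed

text \<open>For \<open>\<theta> = 0\<close> the condition on \<open>s\<^sub>k\<^sub>+\<^sub>1\<close> forces it to vanish, so both cases of the
  definition of admissibility take the same form.\<close>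

lemma admissible_nat_add_frac_iff:
  fixes k :: nat
  assumes \<theta>: "0 \<le> \<theta>" "\<theta> < 1" and kd: "real k + \<theta> \<le> real d"
  shows "admissible d (real k + \<theta>) \<psi> \<longleftrightarrow> unit_vec_dd d \<psi> \<and>
    (\<forall>j. k + 1 < j \<and> j \<le> d \<longrightarrow> schmidt d \<psi> j = 0) \<and>
    (k < d \<longrightarrow> schmidt d \<psi> (k + 1) \<le> \<theta> / real k * (\<Sum>j=1..k. schmidt d \<psi> j))"
proof (cases "\<theta> = 0")
  case True
  have "schmidt d \<psi> (k + 1) = 0 \<longleftrightarrow> schmidt d \<psi> (k + 1) \<le> 0" if "unit_vec_dd d \<psi>" "k < d"
    using schmidt_nonneg[of \<psi> d "k + 1"] that unfolding unit_vec_dd_def by auto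
  thus ?thesis using True unfolding admissible_def Let_def ceiling_nat_add_frac[OF \<theta>]
    by (auto simp: Suc_le_eq) (metis Suc_lessI le_less)
next
  case False
  hence "k < d" using kd \<theta> by linarith
  thus ?thesis using False \<theta>
    unfolding admissible_def Let_def floor_nat_add_frac[OF \<theta>] ceiling_nat_add_frac[OF \<theta>] by auto
qed

(* The difference of the two sides factors as (k x - \<theta> S) (k (k + 2 \<theta> - 1) x - (2 k + \<theta> - k \<theta>) S),
   and under the hypotheses both factors are non-positive. *)
lemma tstar_extremal_ineq:
  fixes k \<theta> S x :: real
  assumes k: "k \<ge> 1" and \<theta>: "0 \<le> \<theta>" "\<theta> < 1" and S: "S \<ge> 0" and x: "0 \<le> x" "k * x \<le> \<theta> * S"
  shows "k * (S + x)\<^sup>2 * (k + \<theta>\<^sup>2) \<le> (k + \<theta>)\<^sup>2 * (S\<^sup>2 + k * x\<^sup>2)"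
proof -
  have "(k + 2*\<theta> - 1) * (k * x) \<le> (k + 2*\<theta> - 1) * (\<theta> * S)"
    using x k \<theta> by (intro mult_left_mono) auto
  also have "\<dots> \<le> (2*k + \<theta> - k*\<theta>) * S"
  proof -
    have "(2*k + \<theta> - k*\<theta>) - (k + 2*\<theta> - 1) * \<theta> = 2 * (k + \<theta>) * (1 - \<theta>)"
      by (simp add: algebra_simps)
    also have "\<dots> \<ge> 0" using k \<theta> by simp
    finally show ?thesis using S by (simp add: mult_right_mono mult.assoc[symmetric])
  qed
  finally have "k * (k + 2*\<theta> - 1) * x - (2*k + \<theta> - k*\<theta>) * S \<le> 0"
    by (simp add: algebra_simps)
  moreover have "k * x - \<theta> * S \<le> 0" using x by simp
  ultimately have "0 \<le> (k * x - \<theta> * S) * (k * (k + 2*\<theta> - 1) * x - (2*k + \<theta> - k*\<theta>) * S)"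
    by (rule mult_nonpos_nonpos[rotated])
  also have "\<dots> = (k + \<theta>)\<^sup>2 * (S\<^sup>2 + k * x\<^sup>2) - k * (S + x)\<^sup>2 * (k + \<theta>\<^sup>2)"
    by (simp add: power2_eq_square algebra_simps)
  finally show ?thesis by simp
qed

lemma profile_sum_sq_bound:
  fixes f :: "nat \<Rightarrow> real" and k :: nat
  assumes k: "1 \<le> k" "k \<le> d" and \<theta>: "0 \<le> \<theta>" "\<theta> < 1"
    and nonneg: "\<And>j. j < d \<Longrightarrow> 0 \<le> f j" and unit: "(\<Sum>j<d. (f j)\<^sup>2) = 1"
    and tail: "\<And>j. k < j \<Longrightarrow> j < d \<Longrightarrow> f j = 0"
    and head: "k < d \<Longrightarrow> f k \<le> \<theta> / real k * (\<Sum>j<k. f j)"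
  shows "(\<Sum>j<d. f j)\<^sup>2 * (real k + \<theta>\<^sup>2) \<le> (real k + \<theta>)\<^sup>2"
proof -
  define S where "S = (\<Sum>j<k. f j)"
  define x where "x = (if k < d then f k else 0)"
  have split: "(\<Sum>j<d. g j) = (\<Sum>j<k. g j) + (if k < d then g k else 0)"
    if "\<And>j. k < j \<Longrightarrow> j < d \<Longrightarrow> g j = 0" for g :: "nat \<Rightarrow> real"
  proof -
    have "(\<Sum>j<d. g j) = (\<Sum>j<k. g j) + (\<Sum>j\<in>{k..<d}. g j)"
      using k by (metis atLeast0LessThan sum.atLeastLessThan_concat zero_le)
    also have "(\<Sum>j\<in>{k..<d}. g j) = (\<Sum>j\<in>{k..<d}. if j = k then g j else 0)"
      using that by (intro sum.cong) auto
    finally show ?thesis by (simp add: sum.delta)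
  qed
  have sum_eq: "(\<Sum>j<d. f j) = S + x" unfolding S_def x_def using split tail by blast
  have sq_eq: "(\<Sum>j<k. (f j)\<^sup>2) + x\<^sup>2 = 1"
    using split[of "\<lambda>j. (f j)\<^sup>2"] tail unit unfolding x_def by (auto split: if_splits)
  have "S\<^sup>2 \<le> (\<Sum>j<k. (f j)\<^sup>2) * real k"
    unfolding S_def using sum_squared_le_sum_of_squares[of f "{..<k}"] by simp
  hence "S\<^sup>2 + k * x\<^sup>2 \<le> k * ((\<Sum>j<k. (f j)\<^sup>2) + x\<^sup>2)" by (simp add: algebra_simps)
  hence "S\<^sup>2 + k * x\<^sup>2 \<le> k" unfolding sq_eq by simp
  have "S \<ge> 0" unfolding S_def using nonneg k by (intro sum_nonneg) auto
  moreover have "0 \<le> x" "k * x \<le> \<theta> * S"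
    using nonneg head[folded S_def] k \<theta> \<open>S \<ge> 0\<close> unfolding x_def by (auto simp: field_simps)
  ultimately have "k * (S + x)\<^sup>2 * (k + \<theta>\<^sup>2) \<le> (k + \<theta>)\<^sup>2 * (S\<^sup>2 + k * x\<^sup>2)"
    using k \<theta> by (intro tstar_extremal_ineq) auto
  also have "\<dots> \<le> (k + \<theta>)\<^sup>2 * k"
    using \<open>S\<^sup>2 + k * x\<^sup>2 \<le> k\<close> by (intro mult_left_mono) auto
  finally show ?thesis unfolding sum_eq using k by (simp add: mult.commute mult.left_commute)
qed

lemma admissible_trace_bound:
  assumes \<alpha>: "1 \<le> \<alpha>" "\<alpha> \<le> real d" and adm: "admissible d \<alpha> \<psi>"
  shows "(cmod (mtrace (coeff_mat d \<psi>)))\<^sup>2 * tstar \<alpha> \<le> 1"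
proof -
  obtain k :: nat and \<theta> where \<alpha>_eq: "\<alpha> = real k + \<theta>" and k: "1 \<le> k" and \<theta>: "0 \<le> \<theta>" "\<theta> < 1"
    using nat_add_frac_decomp[OF \<alpha>(1)] .
  have kd: "real k + \<theta> \<le> real d" using \<alpha> \<alpha>_eq by simp
  have unit: "unit_vec_dd d \<psi>"
    and tail: "\<And>j. k + 1 < j \<Longrightarrow> j \<le> d \<Longrightarrow> schmidt d \<psi> j = 0"
    and head: "k < d \<Longrightarrow> schmidt d \<psi> (k + 1) \<le> \<theta> / real k * (\<Sum>j=1..k. schmidt d \<psi> j)"
    using adm unfolding \<alpha>_eq admissible_nat_add_frac_iff[OF \<theta> kd] by auto
  define A where "A = coeff_mat d \<psi>"
  define f where "f j = singular_values A ! j" for j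
  have A: "A \<in> carrier_mat d d" unfolding A_def coeff_mat_def by simp
  have \<psi>: "\<psi> \<in> carrier_vec (d * d)" using unit unfolding unit_vec_dd_def by simp
  have sch: "schmidt d \<psi> j = f (j - 1)" for j unfolding schmidt_def f_def A_def ..
  have sum_f: "(\<Sum>j<d. g (f j)) = (\<Sum>s \<leftarrow> singular_values A. g s)" for g
    unfolding f_def sum_list_sum_nth by (simp add: atLeast0LessThan length_singular_values[OF A])
  have "(\<Sum>j<d. f j)\<^sup>2 * (real k + \<theta>\<^sup>2) \<le> (real k + \<theta>)\<^sup>2"
  proof (rule profile_sum_sq_bound)
    show "k \<le> d" using kd \<theta> by linarith
    show "0 \<le> f j" if "j < d" for j
      unfolding f_def using that singular_values_nonneg[OF A] length_singular_values[OF A] by simp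
    show "(\<Sum>j<d. (f j)\<^sup>2) = 1"
      using sum_f[of "\<lambda>s. s\<^sup>2"] sum_singular_values_sq[OF A] frobenius_sq_coeff_mat[OF \<psi>] unit
      unfolding A_def unit_vec_dd_def by simp
    show "f j = 0" if "k < j" "j < d" for j using tail[of "j + 1"] that sch by simp
    show "f k \<le> \<theta> / real k * (\<Sum>j<k. f j)" if "k < d"
      using head[OF that] sch by (simp add: sum.atLeast1_atMost_eq)
  qed (use k \<theta> in auto)
  moreover have "cmod (mtrace A) \<le> (\<Sum>j<d. f j)"
    using cmod_mtrace_le_sum_singular_values[OF A] sum_f[of "\<lambda>s. s"] by simp
  hence "(cmod (mtrace A))\<^sup>2 * (real k + \<theta>\<^sup>2) \<le> (\<Sum>j<d. f j)\<^sup>2 * (real k + \<theta>\<^sup>2)"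
    by (intro mult_right_mono power_mono) auto
  ultimately have "(cmod (mtrace A))\<^sup>2 * (real k + \<theta>\<^sup>2) \<le> (real k + \<theta>)\<^sup>2" by linarith
  moreover have "(real k + \<theta>)\<^sup>2 > 0" using k \<theta> by simp
  ultimately show ?thesis
    unfolding \<alpha>_eq tstar_nat_add_frac[OF \<theta>] A_def by (simp add: field_simps)
qed

section \<open>The extremal vector\<close>

lemma singular_values_diag:
  assumes nonneg: "\<And>i. i < d \<Longrightarrow> 0 \<le> c i" and anti: "\<And>i j. i \<le> j \<Longrightarrow> j < d \<Longrightarrow> c j \<le> c i"
  shows "singular_values (mat d d (\<lambda>(i,j). if i = j then complex_of_real (c i) else 0)) = map c [0..<d]"
    (is "singular_values ?A = _")
proof -
  let ?H = "mat d d (\<lambda>(i,j). if i = j then complex_of_real ((c i)\<^sup>2) else 0)"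
  have adj_A_A: "adj ?A * ?A = ?H"
  proof (rule eq_matI)
    fix i j assume "i < dim_row ?H" "j < dim_col ?H"
    hence ij: "i < d" "j < d" by auto
    have "(adj ?A * ?A) $$ (i,j) = (\<Sum>l<d. cnj (?A $$ (l,i)) * ?A $$ (l,j))"
      using ij by (simp add: scalar_prod_def atLeast0LessThan)
    also have "\<dots> = (\<Sum>l<d. if l = i then ?H $$ (i,j) else 0)"
      using ij by (intro sum.cong) (auto simp: power2_eq_square)
    finally show "(adj ?A * ?A) $$ (i,j) = ?H $$ (i,j)" using ij by (simp add: sum.delta)
  qed auto
  have "char_poly ?H = (\<Prod>a \<leftarrow> diag_mat ?H. [:- a, 1:])"
    by (rule char_poly_upper_triangular) (auto simp: upper_triangular_def)
  hence "proots (char_poly ?H) = mset (diag_mat ?H)" by (simp only: proots_prod_linear)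
  moreover have "diag_mat ?H = map (\<lambda>i. complex_of_real ((c i)\<^sup>2)) [0..<d]"
    unfolding diag_mat_def by simp
  ultimately have "image_mset (\<lambda>z. sqrt (Re z)) (proots (char_poly (adj ?A * ?A)))
      = mset (map (\<lambda>i. sqrt ((c i)\<^sup>2)) [0..<d])"
    unfolding adj_A_A by (simp add: multiset.map_comp comp_def del: of_real_power)
  also have "\<dots> = mset (map c [0..<d])"
    using nonneg by (intro arg_cong[where f = mset] map_cong) auto
  finally have ms: "image_mset (\<lambda>z. sqrt (Re z)) (proots (char_poly (adj ?A * ?A))) = mset (map c [0..<d])" .
  have "sorted (rev (map c [0..<d]))"
    unfolding sorted_rev_iff_nth_mono using anti by simp
  hence "sort (map c [0..<d]) = rev (map c [0..<d])" by (intro properties_for_sort) simp_all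
  thus ?thesis unfolding singular_values_def ms sorted_list_of_multiset_mset by simp
qed

definition diag_state :: "nat \<Rightarrow> (nat \<Rightarrow> real) \<Rightarrow> complex vec" where
  "diag_state d c = vec (d * d) (\<lambda>p. if p div d = p mod d then complex_of_real (c (p div d)) else 0)"

lemma diag_state_carrier: "diag_state d c \<in> carrier_vec (d * d)"
  unfolding diag_state_def by simp

lemma coeff_mat_diag_state:
  "coeff_mat d (diag_state d c) = mat d d (\<lambda>(i,j). if i = j then complex_of_real (c i) else 0)"
  unfolding coeff_mat_def diag_state_def by (rule eq_matI) (auto simp: index_lt_mult)

lemma mtrace_coeff_mat_diag_state: "mtrace (coeff_mat d (diag_state d c)) = complex_of_real (\<Sum>i<d. c i)"
  unfolding coeff_mat_diag_state mtrace_def by simp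

lemma norm_diag_state: "(\<Sum>p<d * d. (cmod (diag_state d c $ p))\<^sup>2) = (\<Sum>i<d. (c i)\<^sup>2)"
proof -
  have "(\<Sum>p<d * d. (cmod (diag_state d c $ p))\<^sup>2) = frobenius_sq (coeff_mat d (diag_state d c))"
    by (rule frobenius_sq_coeff_mat[OF diag_state_carrier, symmetric])
  also have "\<dots> = (\<Sum>j<d. \<Sum>i<d. if i = j then (c j)\<^sup>2 else 0)"
    unfolding coeff_mat_diag_state frobenius_sq_def by (intro sum.cong refl) auto
  finally show ?thesis by simp
qed

lemma schmidt_diag_state:
  assumes "\<And>i. i < d \<Longrightarrow> 0 \<le> c i" "\<And>i j. i \<le> j \<Longrightarrow> j < d \<Longrightarrow> c j \<le> c i"
    and "1 \<le> j" "j \<le> d"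
  shows "schmidt d (diag_state d c) j = c (j - 1)"
  using singular_values_diag[of d c] assms unfolding schmidt_def coeff_mat_diag_state by simp

definition extremal_profile :: "nat \<Rightarrow> real \<Rightarrow> nat \<Rightarrow> real" where
  "extremal_profile k \<theta> i = (if i < k then 1 else if i = k then \<theta> else 0) / sqrt (real k + \<theta>\<^sup>2)"

lemma sum_extremal_profile:
  fixes k :: nat
  assumes \<theta>: "0 \<le> \<theta>" and kd: "real k + \<theta> \<le> real d" and h: "h 0 = 0"
  shows "(\<Sum>i<d. h (extremal_profile k \<theta> i))
    = real k * h (1 / sqrt (real k + \<theta>\<^sup>2)) + h (\<theta> / sqrt (real k + \<theta>\<^sup>2))"
proof -
  let ?c = "extremal_profile k \<theta>"
  have "k \<le> d" using kd \<theta> by linarith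
  hence "(\<Sum>i<d. h (?c i)) = (\<Sum>i<k. h (?c i)) + (\<Sum>i\<in>{k..<d}. h (?c i))"
    by (metis atLeast0LessThan sum.atLeastLessThan_concat zero_le)
  also have "(\<Sum>i\<in>{k..<d}. h (?c i)) = (\<Sum>i\<in>{k..<d}. if i = k then h (?c k) else 0)"
    using h by (intro sum.cong) (auto simp: extremal_profile_def)
  also have "\<dots> = h (?c k)"
  proof (cases "k < d")
    case False
    hence "real d \<le> real k" by simp
    hence "\<theta> = 0" using kd \<theta> by linarith
    thus ?thesis using False h by (simp add: extremal_profile_def)
  qed (simp add: sum.delta)
  finally show ?thesis by (simp add: extremal_profile_def)
qed

lemma admissible_trace_extremal:
  assumes \<alpha>: "1 \<le> \<alpha>" "\<alpha> \<le> real d"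
  shows "\<exists>\<psi> \<in> V_alpha d \<alpha>. (cmod (mtrace (coeff_mat d \<psi>)))\<^sup>2 * tstar \<alpha> = 1"
proof -
  obtain k :: nat and \<theta> where \<alpha>_eq: "\<alpha> = real k + \<theta>" and k: "1 \<le> k" and \<theta>: "0 \<le> \<theta>" "\<theta> < 1"
    using nat_add_frac_decomp[OF \<alpha>(1)] .
  have kd: "real k + \<theta> \<le> real d" using \<alpha> \<alpha>_eq by simp
  define N where "N = sqrt (real k + \<theta>\<^sup>2)"
  have N: "N > 0" "N\<^sup>2 = real k + \<theta>\<^sup>2" "real k + \<theta>\<^sup>2 > 0"
    unfolding N_def using k by (auto simp: add_pos_nonneg)
  define c where "c = extremal_profile k \<theta>"
  define \<psi> where "\<psi> = diag_state d c"
  have sch: "schmidt d \<psi> j = c (j - 1)" if "1 \<le> j" "j \<le> d" for j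
    unfolding \<psi>_def c_def using that N \<theta>
    by (intro schmidt_diag_state) (auto simp: extremal_profile_def intro!: divide_right_mono)
  have "(\<Sum>p<d * d. (cmod (\<psi> $ p))\<^sup>2) = 1"
    unfolding \<psi>_def norm_diag_state c_def sum_extremal_profile[OF \<theta>(1) kd, of "\<lambda>z. z\<^sup>2", simplified]
    using N by (simp add: power_divide flip: add_divide_distrib)
  hence unit: "unit_vec_dd d \<psi>" unfolding unit_vec_dd_def \<psi>_def using diag_state_carrier by simp
  have adm: "admissible d \<alpha> \<psi>"
    unfolding \<alpha>_eq admissible_nat_add_frac_iff[OF \<theta> kd]
  proof (intro conjI allI impI unit)
    fix j assume j: "k + 1 < j \<and> j \<le> d"
    hence "\<not> j - 1 < k" "j - 1 \<noteq> k" by auto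
    thus "schmidt d \<psi> j = 0" using sch[of j] j by (simp add: c_def extremal_profile_def)
  next
    assume "k < d"
    hence "(\<Sum>j=1..k. schmidt d \<psi> j) = real k / N"
      by (simp add: sch sum.atLeast1_atMost_eq c_def extremal_profile_def N_def)
    thus "schmidt d \<psi> (k + 1) \<le> \<theta> / real k * (\<Sum>j=1..k. schmidt d \<psi> j)"
      using sch[of "k + 1"] \<open>k < d\<close> k by (simp add: c_def extremal_profile_def N_def)
  qed
  have "cmod (mtrace (coeff_mat d \<psi>)) = (real k + \<theta>) / N"
    unfolding \<psi>_def mtrace_coeff_mat_diag_state norm_of_real c_def
      sum_extremal_profile[OF \<theta>(1) kd, of "\<lambda>z. z", simplified]
    using N \<theta> by (simp add: N_def add_divide_distrib)
  hence "(cmod (mtrace (coeff_mat d \<psi>)))\<^sup>2 * tstar \<alpha> = 1"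
    unfolding \<alpha>_eq tstar_nat_add_frac[OF \<theta>] using N k \<theta> by (simp add: power_divide)
  thus ?thesis using adm unfolding V_alpha_def by blast
qed

section \<open>Monotonicity of \<open>t\<^sup>*\<close>\<close>

lemma tstar_nat_add_frac_bounds:
  fixes k :: nat
  assumes k: "1 \<le> k" and \<theta>: "0 \<le> \<theta>" "\<theta> < 1"
  shows "1 / real (k + 1) < tstar (real k + \<theta>)" "tstar (real k + \<theta>) \<le> 1 / real k"
proof -
  have pos: "(real k + \<theta>)\<^sup>2 > 0" using k \<theta> by simp
  have "(real k + \<theta>)\<^sup>2 + real k * (1 - \<theta>)\<^sup>2 = (real k + 1) * (real k + \<theta>\<^sup>2)"
    by (simp add: power2_eq_square algebra_simps)
  moreover have "real k * (1 - \<theta>)\<^sup>2 > 0" using k \<theta> by simp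
  ultimately show "1 / real (k + 1) < tstar (real k + \<theta>)"
    unfolding tstar_nat_add_frac[OF \<theta>] using pos k by (simp add: field_simps)
  have "real k * (real k + \<theta>\<^sup>2) + (\<theta>\<^sup>2 + real k * \<theta> * (2 - \<theta>)) = (real k + \<theta>)\<^sup>2"
    by (simp add: power2_eq_square algebra_simps)
  moreover have "0 \<le> \<theta>\<^sup>2 + real k * \<theta> * (2 - \<theta>)"
    using \<theta> by (intro add_nonneg_nonneg mult_nonneg_nonneg) auto
  ultimately have "real k * (real k + \<theta>\<^sup>2) \<le> (real k + \<theta>)\<^sup>2" by linarith
  thus "tstar (real k + \<theta>) \<le> 1 / real k"
    unfolding tstar_nat_add_frac[OF \<theta>] using pos k by (simp add: field_simps)
qed

lemma tstar_nat_add_frac_strict_antimono: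
  fixes k :: nat
  assumes k: "1 \<le> k" and ab: "0 \<le> a" "a < b" "b < 1"
  shows "tstar (real k + b) < tstar (real k + a)"
proof -
  define P where "P = (real k - 1) * (a + b)"
  have "P \<le> (real k - 1) * 2" unfolding P_def using k ab by (intro mult_left_mono) auto
  hence "P \<le> 2 * real k - 2" by (simp add: algebra_simps)
  moreover have "a * b \<le> b" using ab by (simp add: mult_left_le_one_le)
  ultimately have "2 * real k - P - 2 * (a * b) > 0" using ab by linarith
  hence "2 * real k - (real k - 1) * (a + b) - 2 * (a * b) > 0" unfolding P_def .
  hence "real k * (b - a) * (2 * real k - (real k - 1) * (a + b) - 2 * (a * b)) > 0"
    using k ab by simp
  also have "\<dots> = (real k + a\<^sup>2) * (real k + b)\<^sup>2 - (real k + b\<^sup>2) * (real k + a)\<^sup>2"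
    by (simp add: power2_eq_square algebra_simps)
  finally have "(real k + b\<^sup>2) * (real k + a)\<^sup>2 < (real k + a\<^sup>2) * (real k + b)\<^sup>2" by simp
  moreover have "(real k + a)\<^sup>2 > 0" "(real k + b)\<^sup>2 > 0" using k ab by auto
  moreover have "0 \<le> b" "a < 1" using ab by auto
  ultimately show ?thesis
    unfolding tstar_nat_add_frac[OF ab(1) \<open>a < 1\<close>] tstar_nat_add_frac[OF \<open>0 \<le> b\<close> ab(3)]
    by (simp add: field_simps)
qed

lemma tstar_strict_antimono:
  assumes "1 \<le> \<alpha>" "\<alpha> < \<beta>"
  shows "tstar \<beta> < tstar \<alpha>"
proof -
  obtain k a where \<alpha>: "\<alpha> = real k + a" "1 \<le> k" "0 \<le> a" "a < 1"
    using nat_add_frac_decomp[OF assms(1)] .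
  obtain l b where \<beta>: "\<beta> = real l + b" "1 \<le> l" "0 \<le> b" "b < 1"
    using nat_add_frac_decomp[of \<beta>] assms by auto
  have "k \<le> l" using \<alpha> \<beta> assms(2) by linarith
  show ?thesis
  proof (cases "k = l")
    case True
    thus ?thesis using tstar_nat_add_frac_strict_antimono[of k a b] \<alpha> \<beta> assms(2) by simp
  next
    case False
    hence "1 / real l \<le> 1 / real (k + 1)"
      using \<open>k \<le> l\<close> \<alpha>(2) by (intro divide_left_mono) auto
    thus ?thesis
      using tstar_nat_add_frac_bounds(2)[OF \<beta>(2-4)] tstar_nat_add_frac_bounds(1)[OF \<alpha>(2-4)]
      unfolding \<alpha>(1) \<beta>(1) by linarith
  qed
qed

lemma tstar_antimono: "1 \<le> \<alpha> \<Longrightarrow> \<alpha> \<le> \<beta> \<Longrightarrow> tstar \<beta> \<le> tstar \<alpha>"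
  using tstar_strict_antimono[of \<alpha> \<beta>] by (cases "\<alpha> = \<beta>") auto

lemma tstar_inj:
  assumes "1 \<le> \<alpha>" "1 \<le> \<beta>" "tstar \<alpha> = tstar \<beta>"
  shows "\<alpha> = \<beta>"
  using tstar_strict_antimono[of \<alpha> \<beta>] tstar_strict_antimono[of \<beta> \<alpha>] assms by fastforce

lemma tstar_of_nat: "1 \<le> k \<Longrightarrow> tstar (real k) = 1 / real k"
  using tstar_nat_add_frac[of 0 k] by (simp add: power2_eq_square)

lemma in_P_Phi_t_iff_tstar:
  assumes \<alpha>: "1 \<le> \<alpha>" "\<alpha> \<le> real d"
  shows "in_P d \<alpha> (Phi_t d t) \<longleftrightarrow> t \<le> tstar \<alpha>"
proof
  assume "in_P d \<alpha> (Phi_t d t)"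
  moreover obtain \<psi> where "\<psi> \<in> V_alpha d \<alpha>" and "(cmod (mtrace (coeff_mat d \<psi>)))\<^sup>2 * tstar \<alpha> = 1"
    using admissible_trace_extremal[OF \<alpha>] by blast
  ultimately have "t * (cmod (mtrace (coeff_mat d \<psi>)))\<^sup>2 \<le> tstar \<alpha> * (cmod (mtrace (coeff_mat d \<psi>)))\<^sup>2"
    and "(cmod (mtrace (coeff_mat d \<psi>)))\<^sup>2 > 0"
    unfolding in_P_Phi_t_iff by (auto simp: mult.commute intro: ccontr)
  thus "t \<le> tstar \<alpha>" by simp
next
  assume t: "t \<le> tstar \<alpha>"
  show "in_P d \<alpha> (Phi_t d t)" unfolding in_P_Phi_t_iff
  proof
    fix \<psi> assume "\<psi> \<in> V_alpha d \<alpha>"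
    hence "(cmod (mtrace (coeff_mat d \<psi>)))\<^sup>2 * tstar \<alpha> \<le> 1"
      using admissible_trace_bound[OF \<alpha>] unfolding V_alpha_def by blast
    moreover have "t * (cmod (mtrace (coeff_mat d \<psi>)))\<^sup>2 \<le> tstar \<alpha> * (cmod (mtrace (coeff_mat d \<psi>)))\<^sup>2"
      using t by (intro mult_right_mono) auto
    ultimately show "t * (cmod (mtrace (coeff_mat d \<psi>)))\<^sup>2 \<le> 1" by (simp add: mult.commute)
  qed
qed

lemma stability_index_Phi_t:
  "stability_index d (Phi_t d t) = Sup {\<alpha>. 1 \<le> \<alpha> \<and> \<alpha> \<le> real d \<and> t \<le> tstar \<alpha>}"
  unfolding stability_index_def using in_P_Phi_t_iff_tstar by (metis (lifting))

lemma stability_index_Phi_t_eq_dim: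
  assumes d: "1 \<le> d" and t: "t \<le> 1 / real d"
  shows "stability_index d (Phi_t d t) = real d"
proof -
  have "{\<alpha>. 1 \<le> \<alpha> \<and> \<alpha> \<le> real d \<and> t \<le> tstar \<alpha>} = {1..real d}"
    using tstar_antimono[of _ "real d"] tstar_of_nat[OF d] t by force
  thus ?thesis unfolding stability_index_Phi_t using d by simp
qed

lemma stability_index_Phi_t_eq_tstar_inv:
  assumes a: "1 \<le> a" "a \<le> real d" and t: "tstar a = t"
  shows "stability_index d (Phi_t d t) = a"
proof -
  have "{\<alpha>. 1 \<le> \<alpha> \<and> \<alpha> \<le> real d \<and> t \<le> tstar \<alpha>} = {1..a}"
    using tstar_antimono[of _ a] tstar_strict_antimono[of a] a t by (force simp: not_le[symmetric])
  thus ?thesis unfolding stability_index_Phi_t using a by simp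
qed

section \<open>Complete positivity for \<open>t \<le> 1/d\<close>\<close>

definition sesq :: "complex mat \<Rightarrow> nat \<Rightarrow> (nat \<Rightarrow> complex) \<Rightarrow> (nat \<Rightarrow> complex) \<Rightarrow> complex" where
  "sesq X N x y = (\<Sum>p<N. \<Sum>q<N. X $$ (p,q) * y q * cnj (x p))"

lemma qform_eq_sesq:
  assumes "X \<in> carrier_mat N N" "v \<in> carrier_vec N"
  shows "qform X v = sesq X N (\<lambda>p. v $ p) (\<lambda>p. v $ p)"
  unfolding qform_eq_sum[OF assms] sesq_def by (simp add: sum_distrib_right)

lemma psd_sesq_nonneg:
  assumes "psd N X"
  shows "Im (sesq X N x x) = 0" "Re (sesq X N x x) \<ge> 0"
proof -
  have X: "X \<in> carrier_mat N N" using assms unfolding psd_def by auto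
  have "qform X (vec N x) = sesq X N x x"
    unfolding qform_eq_sesq[OF X vec_carrier] sesq_def by (intro sum.cong refl) simp
  hence "sesq X N x x = qform X (vec N x)" by simp
  thus "Im (sesq X N x x) = 0" "Re (sesq X N x x) \<ge> 0" using assms unfolding psd_def by auto
qed

lemma sesq_diff:
  "sesq X N (\<lambda>p. x p - y p) (\<lambda>p. x p - y p) = sesq X N x x + sesq X N y y - sesq X N x y - sesq X N y x"
  unfolding sesq_def by (simp add: algebra_simps sum.distrib sum_subtractf)

lemma sesq_sum:
  "sesq X N (\<lambda>p. \<Sum>l\<in>L. x l p) (\<lambda>q. \<Sum>m\<in>M. y m q) = (\<Sum>l\<in>L. \<Sum>m\<in>M. sesq X N (x l) (y m))"
  unfolding sesq_def
  by (simp add: cnj_sum sum_distrib_left sum_distrib_right mult.assoc mult.left_commute,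
      subst (2) sum.swap, subst sum.swap, simp add: sum.swap[of _ M])

lemma psd_sesq_sum_le:
  assumes "psd N X"
  shows "Re (sesq X N (\<lambda>p. \<Sum>l<d. w l p) (\<lambda>p. \<Sum>l<d. w l p)) \<le> real d * (\<Sum>l<d. Re (sesq X N (w l) (w l)))"
proof -
  have "0 \<le> (\<Sum>l<d. \<Sum>m<d. Re (sesq X N (\<lambda>p. w l p - w m p) (\<lambda>p. w l p - w m p)))"
    using psd_sesq_nonneg(2)[OF assms] by (intro sum_nonneg) auto
  also have "\<dots> = 2 * (real d * (\<Sum>l<d. Re (sesq X N (w l) (w l))))
      - 2 * Re (sesq X N (\<lambda>p. \<Sum>l<d. w l p) (\<lambda>p. \<Sum>l<d. w l p))"
    unfolding sesq_diff sesq_sum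
    by (simp add: sum_subtractf sum.distrib Re_sum sum.swap[of "\<lambda>l m. Re (sesq X N (w m) (w l))"]
        flip: sum_distrib_left)
  finally show ?thesis by simp
qed

lemma sesq_blocks:
  fixes n d :: nat
  shows "sesq X (n * d) x y
    = (\<Sum>a<n. \<Sum>i<d. \<Sum>b<n. \<Sum>j<d. X $$ (a * d + i, b * d + j) * y (b * d + j) * cnj (x (a * d + i)))"
  unfolding sesq_def sum_lessThan_mult[of _ n d] ..

lemma ampliation_Phi_t_index:
  assumes p: "p < n * d" and q: "q < n * d"
  shows "ampliation n d (Phi_t d t) X $$ (p,q) =
    (if p mod d = q mod d then (\<Sum>m<d. X $$ (p div d * d + m, q div d * d + m)) else 0)
      - of_real t * X $$ (p,q)"
proof -
  have "p mod d < d" "q mod d < d" using p by (cases d; auto)+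
  thus ?thesis unfolding ampliation_def Phi_t_def mtrace_def using p q by simp
qed

lemma ampliation_Phi_t_block_index:
  assumes "a < n" "b < n" "i < d" "j < d"
  shows "ampliation n d (Phi_t d t) X $$ (a * d + i, b * d + j) =
    (if i = j then (\<Sum>m<d. X $$ (a * d + m, b * d + m)) else 0) - of_real t * X $$ (a * d + i, b * d + j)"
  using ampliation_Phi_t_index[OF index_lt_mult[of a n i d] index_lt_mult[of b n j d]] assms by simp

lemma ampliation_Phi_t_hermitian:
  assumes X: "X \<in> carrier_mat (n * d) (n * d)" "adj X = X"
  shows "adj (ampliation n d (Phi_t d t) X) = ampliation n d (Phi_t d t) X"
proof (rule eq_matI)
  let ?Y = "ampliation n d (Phi_t d t) X"
  have X_entry: "cnj (X $$ (q,p)) = X $$ (p,q)" if "p < n * d" "q < n * d" for p q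
    using arg_cong[OF X(2), of "\<lambda>M. M $$ (p,q)"] that X(1) by auto
  fix p q assume "p < dim_row ?Y" "q < dim_col ?Y"
  hence p: "p < n * d" and q: "q < n * d" unfolding ampliation_def by auto
  hence "p div d < n" "q div d < n" by (auto simp: less_mult_imp_div_less)
  hence "m < d \<Longrightarrow> cnj (X $$ (q div d * d + m, p div d * d + m)) = X $$ (p div d * d + m, q div d * d + m)"
    for m using X_entry index_lt_mult by blast
  moreover have "adj ?Y $$ (p,q) = cnj (?Y $$ (q,p))" using p q by (simp add: ampliation_def)
  ultimately show "adj ?Y $$ (p,q) = ?Y $$ (p,q)"
    unfolding ampliation_Phi_t_index[OF q p] ampliation_Phi_t_index[OF p q]
    using X_entry[OF p q] by (auto simp: cnj_sum intro!: sum.cong)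
qed (auto simp: ampliation_def)

definition slot_move :: "nat \<Rightarrow> (nat \<Rightarrow> complex) \<Rightarrow> nat \<Rightarrow> nat \<Rightarrow> nat \<Rightarrow> complex" where
  "slot_move d V l m p = (if p mod d = m then V (p div d * d + l) else 0)"

lemma sum_slot_move_diag:
  assumes "0 < d"
  shows "(\<Sum>l<d. slot_move d V l l p) = V p"
proof -
  have "(\<Sum>l<d. slot_move d V l l p) = (\<Sum>l<d. if l = p mod d then V (p div d * d + l) else 0)"
    unfolding slot_move_def by (intro sum.cong) auto
  thus ?thesis using assms by (simp add: sum.delta)
qed

lemma sesq_slot_move:
  fixes n d :: nat
  assumes m: "m < d"
  shows "sesq X (n * d) (slot_move d V l m) (slot_move d V l m)
    = (\<Sum>a<n. \<Sum>b<n. X $$ (a * d + m, b * d + m) * V (b * d + l) * cnj (V (a * d + l)))"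
proof -
  let ?E = "\<lambda>a b. X $$ (a * d + m, b * d + m) * V (b * d + l) * cnj (V (a * d + l))"
  have slot: "slot_move d V l m (a * d + i) = (if i = m then V (a * d + l) else 0)" if "i < d" for a i
    using that by (simp add: slot_move_def)
  have "sesq X (n * d) (slot_move d V l m) (slot_move d V l m)
    = (\<Sum>a<n. \<Sum>i<d. \<Sum>b<n. \<Sum>j<d. if i = m then if j = m then ?E a b else 0 else 0)"
    unfolding sesq_blocks by (intro sum.cong refl) (simp add: slot)
  also have "\<dots> = (\<Sum>a<n. \<Sum>i<d. if i = m then \<Sum>b<n. ?E a b else 0)"
    by (intro sum.cong refl) (use m in \<open>simp add: sum.delta\<close>)
  finally show ?thesis using m by (simp add: sum.delta)
qed

lemma qform_ampliation_Phi_t: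
  fixes n d :: nat
  assumes X: "X \<in> carrier_mat (n * d) (n * d)" and v: "v \<in> carrier_vec (n * d)"
  defines "V \<equiv> \<lambda>p. v $ p"
  shows "qform (ampliation n d (Phi_t d t) X) v
    = (\<Sum>l<d. \<Sum>m<d. sesq X (n * d) (slot_move d V l m) (slot_move d V l m))
      - of_real t * sesq X (n * d) V V"
proof -
  let ?x = "\<lambda>a b m. X $$ (a * d + m, b * d + m)"
  have Y: "ampliation n d (Phi_t d t) X \<in> carrier_mat (n * d) (n * d)" unfolding ampliation_def by simp
  have "qform (ampliation n d (Phi_t d t) X) v
    = (\<Sum>a<n. \<Sum>i<d. \<Sum>b<n. \<Sum>j<d.
        (if i = j then (\<Sum>m<d. ?x a b m) * V (b * d + j) * cnj (V (a * d + i)) else 0)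
        - of_real t * (X $$ (a * d + i, b * d + j) * V (b * d + j) * cnj (V (a * d + i))))"
    unfolding qform_eq_sesq[OF Y v] sesq_blocks V_def
  proof (intro sum.cong refl)
    fix a i b j assume "a \<in> {..<n}" "i \<in> {..<d}" "b \<in> {..<n}" "j \<in> {..<d}"
    hence "a < n" "b < n" "i < d" "j < d" by auto
    note entry = ampliation_Phi_t_block_index[OF this, of t X]
    show "ampliation n d (Phi_t d t) X $$ (a * d + i, b * d + j) * v $ (b * d + j) * cnj (v $ (a * d + i))
      = (if i = j then (\<Sum>m<d. ?x a b m) * v $ (b * d + j) * cnj (v $ (a * d + i)) else 0)
        - of_real t * (X $$ (a * d + i, b * d + j) * v $ (b * d + j) * cnj (v $ (a * d + i)))"
      unfolding entry by (cases "i = j") (simp_all add: algebra_simps)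
  qed
  also have "\<dots> = (\<Sum>a<n. \<Sum>i<d. \<Sum>b<n. (\<Sum>m<d. ?x a b m) * V (b * d + i) * cnj (V (a * d + i)))
      - of_real t * sesq X (n * d) V V"
    unfolding sesq_blocks by (simp add: sum_subtractf sum_distrib_left sum.delta)
  also have "(\<Sum>a<n. \<Sum>i<d. \<Sum>b<n. (\<Sum>m<d. ?x a b m) * V (b * d + i) * cnj (V (a * d + i)))
      = (\<Sum>i<d. \<Sum>m<d. \<Sum>a<n. \<Sum>b<n. ?x a b m * V (b * d + i) * cnj (V (a * d + i)))"
    by (simp add: sum_distrib_right sum.swap[of _ "{..<n}" "{..<d}"] sum.swap[of _ "{..<n}" "{..<d}"])
  also have "\<dots> = (\<Sum>l<d. \<Sum>m<d. sesq X (n * d) (slot_move d V l m) (slot_move d V l m))"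
    by (simp add: sesq_slot_move)
  finally show ?thesis .
qed

theorem completely_positive_Phi_t:
  assumes d: "1 \<le> d" and t: "t \<le> 1 / real d"
  shows "completely_positive d (Phi_t d t)"
  unfolding completely_positive_def
proof (intro allI impI)
  fix n X assume psd: "psd (n * d) X"
  let ?Y = "ampliation n d (Phi_t d t) X"
  let ?u = "\<lambda>V l m. slot_move d V l m"
  have X: "X \<in> carrier_mat (n * d) (n * d)" "adj X = X" using psd unfolding psd_def by auto
  have nonneg: "Im (sesq X (n * d) w w) = 0" "Re (sesq X (n * d) w w) \<ge> 0" for w
    using psd_sesq_nonneg[OF psd] by auto
  have "Im (qform ?Y v) = 0 \<and> Re (qform ?Y v) \<ge> 0" if v: "v \<in> carrier_vec (n * d)" for v
  proof -
    define V where "V p = v $ p" for p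
    define T where "T = (\<Sum>l<d. Re (sesq X (n * d) (?u V l l) (?u V l l)))"
    have "T \<le> (\<Sum>l<d. \<Sum>m<d. Re (sesq X (n * d) (?u V l m) (?u V l m)))"
      unfolding T_def using nonneg by (intro sum_mono member_le_sum) auto
    moreover have "Re (sesq X (n * d) V V) \<le> real d * T"
      using psd_sesq_sum_le[OF psd, where d = d and w = "\<lambda>l. ?u V l l"] d unfolding T_def
      by (simp add: sum_slot_move_diag)
    moreover have "t * real d \<le> 1" using t d by (simp add: field_simps)
    hence "(t * real d) * Re (sesq X (n * d) V V) \<le> 1 * Re (sesq X (n * d) V V)"
      using nonneg(2) by (rule mult_right_mono)
    ultimately have "real d * (t * Re (sesq X (n * d) V V)) \<le> real d * T"
      by (simp add: mult_ac)
    hence "t * Re (sesq X (n * d) V V) \<le> T" using d by simp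
    with \<open>T \<le> _\<close> have "t * Re (sesq X (n * d) V V)
        \<le> (\<Sum>l<d. \<Sum>m<d. Re (sesq X (n * d) (?u V l m) (?u V l m)))"
      by linarith
    thus ?thesis
      unfolding qform_ampliation_Phi_t[OF X(1) v] V_def[symmetric] using nonneg
      by (simp add: Re_sum Im_sum)
  qed
  thus "psd (n * d) ?Y"
    unfolding psd_def using ampliation_Phi_t_hermitian[OF X] by (simp add: ampliation_def)
qed

section \<open>Solving \<open>t\<^sup>*(\<alpha>) = t\<close>\<close>

lemma tstar_eq_iff_quadratic:
  fixes k :: nat
  assumes k: "1 \<le> k" and \<theta>: "0 \<le> \<theta>" "\<theta> < 1"
  shows "t = tstar (real k + \<theta>) \<longleftrightarrow> (t - 1) * \<theta>\<^sup>2 + 2 * t * real k * \<theta> + (t * (real k)\<^sup>2 - real k) = 0"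
proof -
  have "(real k + \<theta>)\<^sup>2 > 0" using k \<theta> by simp
  hence "t = tstar (real k + \<theta>) \<longleftrightarrow> t * (real k + \<theta>)\<^sup>2 - (real k + \<theta>\<^sup>2) = 0"
    unfolding tstar_nat_add_frac[OF \<theta>] by (simp add: field_simps)
  also have "t * (real k + \<theta>)\<^sup>2 - (real k + \<theta>\<^sup>2)
      = (t - 1) * \<theta>\<^sup>2 + 2 * t * real k * \<theta> + (t * (real k)\<^sup>2 - real k)"
    by (simp add: power2_eq_square algebra_simps)
  finally show ?thesis .
qed

lemma quadratic_root_formula:
  fixes k :: nat
  assumes k: "1 \<le> k" and t: "1 / real (k + 1) < t" "t \<le> 1 / real k" "t < 1"
  defines "\<theta> \<equiv> (t * real k - sqrt (real k * (t * real (k + 1) - 1))) / (1 - t)"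
  shows "0 \<le> \<theta>" "\<theta> < 1" "(t - 1) * \<theta>\<^sup>2 + 2 * t * real k * \<theta> + (t * (real k)\<^sup>2 - real k) = 0"
proof -
  define x where "x = t * real (k + 1) - 1"
  define s where "s = sqrt (real k * x)"
  have x: "0 < x" "x < real k"
    unfolding x_def using k t by (auto simp: field_simps)
  have s: "s\<^sup>2 = real k * x" "0 \<le> s" unfolding s_def using x by simp_all
  have \<theta>_eq: "(1 - t) * \<theta> = t * real k - s" unfolding \<theta>_def s_def x_def using t by simp
  have "(t * real k)\<^sup>2 - s\<^sup>2 = real k * (1 - t) * (1 - t * real k)"
    unfolding s x_def by (simp add: power2_eq_square algebra_simps)
  also have "\<dots> \<ge> 0" using t k by (intro mult_nonneg_nonneg) (auto simp: field_simps)
  finally have "real k * x \<le> (t * real k)\<^sup>2" unfolding s by simp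
  hence "s \<le> sqrt ((t * real k)\<^sup>2)" unfolding s_def by (rule real_sqrt_le_mono)
  moreover have "0 \<le> 1 / real (k + 1)" by simp
  hence "0 < t" using t(1) by linarith
  ultimately have "s \<le> t * real k" by simp
  hence "0 \<le> (1 - t) * \<theta>" using \<theta>_eq by simp
  thus "0 \<le> \<theta>" using t(3) by (simp add: zero_le_mult_iff)
  have "x\<^sup>2 < s\<^sup>2" unfolding s using x by (simp add: power2_eq_square)
  hence "x < s" using s(2) by (simp add: power_less_imp_less_base)
  hence "(1 - t) * \<theta> < 1 - t" unfolding \<theta>_eq x_def by (simp add: algebra_simps)
  thus "\<theta> < 1" using t by simp
  have "(1 - t) * ((t - 1) * \<theta>\<^sup>2 + 2 * t * real k * \<theta> + (t * (real k)\<^sup>2 - real k))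
      = - ((1 - t) * \<theta>)\<^sup>2 + 2 * t * real k * ((1 - t) * \<theta>) + (1 - t) * (t * (real k)\<^sup>2 - real k)"
    by (simp add: power2_eq_square algebra_simps)
  also have "\<dots> = - s\<^sup>2 + real k * (t * real k + t - 1)"
    unfolding \<theta>_eq by (simp add: power2_eq_square algebra_simps)
  also have "\<dots> = 0" unfolding s x_def by (simp add: algebra_simps)
  finally show "(t - 1) * \<theta>\<^sup>2 + 2 * t * real k * \<theta> + (t * (real k)\<^sup>2 - real k) = 0" using t by simp
qed

lemma quadratic_root_unique:
  fixes k :: nat
  assumes k: "1 \<le> k" and t: "1 / real (k + 1) < t" "t \<le> 1 / real k" "t < 1"
  shows "\<exists>!\<theta>. 0 \<le> \<theta> \<and> \<theta> < 1 \<and> (t - 1) * \<theta>\<^sup>2 + 2 * t * real k * \<theta> + (t * (real k)\<^sup>2 - real k) = 0"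
    and "(THE \<theta>. 0 \<le> \<theta> \<and> \<theta> < 1 \<and> (t - 1) * \<theta>\<^sup>2 + 2 * t * real k * \<theta> + (t * (real k)\<^sup>2 - real k) = 0)
      = (t * real k - sqrt (real k * (t * real (k + 1) - 1))) / (1 - t)"
proof -
  let ?Q = "\<lambda>\<theta>. 0 \<le> \<theta> \<and> \<theta> < 1 \<and> (t - 1) * \<theta>\<^sup>2 + 2 * t * real k * \<theta> + (t * (real k)\<^sup>2 - real k) = 0"
  define \<theta>\<^sub>0 where "\<theta>\<^sub>0 = (t * real k - sqrt (real k * (t * real (k + 1) - 1))) / (1 - t)"
  note root = quadratic_root_formula[OF k t, folded \<theta>\<^sub>0_def]
  have "tstar (real k + \<theta>) = t" if "?Q \<theta>" for \<theta>
    using iffD2[OF tstar_eq_iff_quadratic[OF k, of \<theta> t]] that by simp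
  hence unique: "\<theta> = \<theta>\<^sub>0" if "?Q \<theta>" for \<theta>
    using tstar_inj[of "real k + \<theta>" "real k + \<theta>\<^sub>0"] that root k by auto
  show ex1: "\<exists>!\<theta>. ?Q \<theta>" using root unique by blast
  show "(THE \<theta>. ?Q \<theta>) = (t * real k - sqrt (real k * (t * real (k + 1) - 1))) / (1 - t)"
    unfolding \<theta>\<^sub>0_def[symmetric] using ex1 root by (intro the1_equality) auto
qed

lemma tstar_eq_solvable:
  assumes d: "1 \<le> d" and t: "1 / real d < t" "t < 1"
  shows "\<exists>\<alpha>. 1 < \<alpha> \<and> \<alpha> < real d \<and> tstar \<alpha> = t"
proof -
  have "0 \<le> 1 / real d" by simp
  hence "0 < t" using t by linarith
  hence "1 < 1 / t" using t by (simp add: field_simps)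
  then obtain k \<theta> where inv_t: "1 / t = real k + \<theta>" and k: "1 \<le> k" and \<theta>: "0 \<le> \<theta>" "\<theta> < 1"
    using nat_add_frac_decomp[of "1 / t"] by auto
  have \<theta>t: "0 \<le> \<theta> * t" "\<theta> * t < t" "\<theta> * t + t * real k = 1"
    using \<theta> \<open>0 < t\<close> inv_t by (auto simp: field_simps)
  hence t_k: "1 / real (k + 1) < t" "t \<le> 1 / real k" using k by (simp_all add: field_simps)
  have "1 < t * real d" using t(1) d by (simp add: field_simps)
  hence "t * real k < t * real d" using \<theta>t by linarith
  hence "real k < real d" using \<open>0 < t\<close> by simp
  define \<theta>\<^sub>0 where "\<theta>\<^sub>0 = (t * real k - sqrt (real k * (t * real (k + 1) - 1))) / (1 - t)"
  note root = quadratic_root_formula[OF k t_k t(2), folded \<theta>\<^sub>0_def]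
  have "tstar (real k + \<theta>\<^sub>0) = t"
    using iffD2[OF tstar_eq_iff_quadratic[OF k root(1,2)] root(3)] by simp
  moreover have "real k + \<theta>\<^sub>0 \<noteq> 1"
    using \<open>tstar (real k + \<theta>\<^sub>0) = t\<close> tstar_of_nat[of 1] t by auto
  ultimately show ?thesis using k root(1,2) \<open>real k < real d\<close>
    by (intro exI[of _ "real k + \<theta>\<^sub>0"]) auto
qed
lemma stability_index_Phi_t_intermediate:
  assumes d: "1 \<le> d" and t: "1 / real d < t" "t < 1"
  shows "\<exists>!\<alpha>. 1 < \<alpha> \<and> \<alpha> < real d \<and> t = tstar \<alpha>"
    and "stability_index d (Phi_t d t) = (THE \<alpha>. 1 < \<alpha> \<and> \<alpha> < real d \<and> t = tstar \<alpha>)"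
proof -
  obtain a where a: "1 < a" "a < real d" "tstar a = t" using tstar_eq_solvable[OF d t] by blast
  show ex1: "\<exists>!\<alpha>. 1 < \<alpha> \<and> \<alpha> < real d \<and> t = tstar \<alpha>"
    using a tstar_inj[of _ a] by (intro ex1I[of _ a]) auto
  have "(THE \<alpha>. 1 < \<alpha> \<and> \<alpha> < real d \<and> t = tstar \<alpha>) = a"
    using ex1 a by (intro the1_equality) auto
  thus "stability_index d (Phi_t d t) = (THE \<alpha>. 1 < \<alpha> \<and> \<alpha> < real d \<and> t = tstar \<alpha>)"
    using stability_index_Phi_t_eq_tstar_inv[of a d t] a by simp
qed

lemma stability_index_Phi_t_interval:
  fixes k :: nat
  assumes k: "1 \<le> k \<and> k \<le> d - 1 \<and> 1 / real (k + 1) < t \<and> t \<le> 1 / real k" and t: "t < 1"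
  shows "(\<exists>!\<theta>. 0 \<le> \<theta> \<and> \<theta> < 1 \<and> (t - 1) * \<theta>\<^sup>2 + 2 * t * real k * \<theta> + (t * (real k)\<^sup>2 - real k) = 0) \<and>
    stability_index d (Phi_t d t) = real k + (THE \<theta>. 0 \<le> \<theta> \<and> \<theta> < 1 \<and>
      (t - 1) * \<theta>\<^sup>2 + 2 * t * real k * \<theta> + (t * (real k)\<^sup>2 - real k) = 0) \<and>
    (t < 1 / real k \<longrightarrow> (THE \<theta>. 0 \<le> \<theta> \<and> \<theta> < 1 \<and>
      (t - 1) * \<theta>\<^sup>2 + 2 * t * real k * \<theta> + (t * (real k)\<^sup>2 - real k) = 0)
      = (t * real k - sqrt (real k * (t * real (k + 1) - 1))) / (1 - t)) \<and>
    (t = 1 / real k \<longrightarrow> (THE \<theta>. 0 \<le> \<theta> \<and> \<theta> < 1 \<and>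
      (t - 1) * \<theta>\<^sup>2 + 2 * t * real k * \<theta> + (t * (real k)\<^sup>2 - real k) = 0) = 0 \<and>
      stability_index d (Phi_t d t) = real k)"
proof -
  let ?Q = "\<lambda>\<theta>. 0 \<le> \<theta> \<and> \<theta> < 1 \<and> (t - 1) * \<theta>\<^sup>2 + 2 * t * real k * \<theta> + (t * (real k)\<^sup>2 - real k) = 0"
  define \<theta>\<^sub>0 where "\<theta>\<^sub>0 = (t * real k - sqrt (real k * (t * real (k + 1) - 1))) / (1 - t)"
  have k1: "1 \<le> k" and t_k: "1 / real (k + 1) < t" "t \<le> 1 / real k" using k by auto
  note root = quadratic_root_formula[OF k1 t_k t, folded \<theta>\<^sub>0_def]
  note unique = quadratic_root_unique[OF k1 t_k t, folded \<theta>\<^sub>0_def]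
  have "tstar (real k + \<theta>\<^sub>0) = t"
    using iffD2[OF tstar_eq_iff_quadratic[OF k1 root(1,2)] root(3)] by simp
  moreover have "real k + \<theta>\<^sub>0 \<le> real d" using k root(2) by linarith
  ultimately have SI: "stability_index d (Phi_t d t) = real k + (THE \<theta>. ?Q \<theta>)"
    using stability_index_Phi_t_eq_tstar_inv[of "real k + \<theta>\<^sub>0" d t] k1 root(1) unique(2) by simp
  have zero: "(THE \<theta>. ?Q \<theta>) = 0" if "t = 1 / real k"
    using unique(1) that k1 by (intro the1_equality) (auto simp: power2_eq_square)
  show ?thesis
  proof (intro conjI impI)
    show "\<exists>!\<theta>. ?Q \<theta>" by (rule unique(1))
    show "stability_index d (Phi_t d t) = real k + (THE \<theta>. ?Q \<theta>)" by (rule SI)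
    show "(THE \<theta>. ?Q \<theta>) = (t * real k - sqrt (real k * (t * real (k + 1) - 1))) / (1 - t)"
      using unique(2) unfolding \<theta>\<^sub>0_def .
    assume "t = 1 / real k"
    thus "(THE \<theta>. ?Q \<theta>) = 0" "stability_index d (Phi_t d t) = real k" using zero SI by simp_all
  qed
qed

theorem corollary4p9:
  fixes d :: nat and t :: real
  assumes d2: "d \<ge> 2"
  shows
    "(t \<le> 0 \<longrightarrow> completely_positive d (Phi_t d t) \<and> stability_index d (Phi_t d t) = real d) \<and>
     (0 < t \<and> t \<le> 1 / real d \<longrightarrow>
        completely_positive d (Phi_t d t) \<and> stability_index d (Phi_t d t) = real d) \<and>
     (1 / real d < t \<and> t < 1 \<longrightarrow>
        (\<exists>!\<alpha>. 1 < \<alpha> \<and> \<alpha> < real d \<and> t = tstar \<alpha>) \<and>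
        stability_index d (Phi_t d t) = (THE \<alpha>. 1 < \<alpha> \<and> \<alpha> < real d \<and> t = tstar \<alpha>) \<and>
        (\<forall>k::nat. 1 \<le> k \<and> k \<le> d - 1 \<and> 1 / real (k+1) < t \<and> t \<le> 1 / real k \<longrightarrow>
           (\<exists>!\<theta>::real. 0 \<le> \<theta> \<and> \<theta> < 1 \<and>
               (t - 1) * \<theta>\<^sup>2 + 2 * t * real k * \<theta> + (t * (real k)\<^sup>2 - real k) = 0) \<and>
           stability_index d (Phi_t d t) = real k + (THE \<theta>::real. 0 \<le> \<theta> \<and> \<theta> < 1 \<and>
               (t - 1) * \<theta>\<^sup>2 + 2 * t * real k * \<theta> + (t * (real k)\<^sup>2 - real k) = 0) \<and>
           (t < 1 / real k \<longrightarrow>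
              (THE \<theta>::real. 0 \<le> \<theta> \<and> \<theta> < 1 \<and>
                 (t - 1) * \<theta>\<^sup>2 + 2 * t * real k * \<theta> + (t * (real k)\<^sup>2 - real k) = 0)
              = (t * real k - sqrt (real k * (t * real (k+1) - 1))) / (1 - t)) \<and>
           (t = 1 / real k \<longrightarrow>
              (THE \<theta>::real. 0 \<le> \<theta> \<and> \<theta> < 1 \<and>
                 (t - 1) * \<theta>\<^sup>2 + 2 * t * real k * \<theta> + (t * (real k)\<^sup>2 - real k) = 0) = 0 \<and>
              stability_index d (Phi_t d t) = real k))) \<and>
     stability_index d (Phi_t d 1) = 1"
proof -
  have d: "1 \<le> d" using d2 by simp
  have small: "completely_positive d (Phi_t d t) \<and> stability_index d (Phi_t d t) = real d"
    if "t \<le> 1 / real d"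
    using completely_positive_Phi_t[OF d that] stability_index_Phi_t_eq_dim[OF d that] by blast
  have "0 \<le> 1 / real d" by simp
  hence "t \<le> 0 \<longrightarrow> t \<le> 1 / real d" by linarith
  moreover have "stability_index d (Phi_t d 1) = 1"
    using stability_index_Phi_t_eq_tstar_inv[of 1 d 1] tstar_of_nat[of 1] d by simp
  ultimately show ?thesis
    using small stability_index_Phi_t_intermediate[OF d] stability_index_Phi_t_interval[of _ d t]
    by blast
qed

end
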